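(* Let $r=1$, let $\{1,\psi_1,\psi_2,\dots\}$ be an orthonormal basis of $L_2(0,1)$ with $c_0=\sup_j\sup_x|\psi_j(x)|<\infty$, let $\gamma>1$, $C>0$, and let $X_1,\dots,X_n$ be i.i.d. with density $p\in\mathcal P(\gamma,C)$. Let $m=m_n=\lfloor n^{1/(2\gamma+1)}\rfloor$, $\hat\beta_j=n^{-1}\sum_{i=1}^n\psi_j(X_i)$, and let $\nu_1,\dots,\nu_m$ be i.i.d. (independent of $X$) with Laplace density $g(\nu)=\frac{n\alpha}{2c_0m}e^{-n\alpha|\nu|/(c_0m)}$. Define $\hat q(x)=1+\sum_{j=1}^m(\hat\beta_j+\nu_j)\psi_j(x)$, replaced by $\hat q(x)I(\hat q(x)>0)/\int_0^1\hat q(s)I(\hat q(s)>0)ds$ if $\hat q$ takes negative values. Let $Z=(Z_1,\dots,Z_k)$ be i.i.d. draws from $\hat q$ with $k\ge n$, and let $\hat p_Z(x)=1+\sum_{j=1}^m\big(k^{-1}\sum_{i=1}^k\psi_j(Z_i)\big)\psi_j(x)$ be the orthogonal series density estimator based on $Z$. Then $$\int_0^1(p(x)-\hat p_Z(x))^2dx=O_P\big(n^{-2\gamma/(2\gamma+1)}\big).$$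
   Context: Sobolev class: for $\gamma>1/2$, $C>0$, $\mathcal B(\gamma,C)=\{\beta=(\beta_1,\beta_2,\dots):\sum_{j\ge1}\beta_j^2j^{2\gamma}\le C^2\}$ and $\mathcal P(\gamma,C)=\{p=1+\sum_{j\ge1}\beta_j\psi_j:\beta\in\mathcal B(\gamma,C)\}$ (densities on $[0,1]$). $\alpha>0$ is fixed; $O_P$ refers to the joint law of $X$, the noise and $Z$. *)

theory Defs
  imports "HOL-Probability.Probability"
begin

definition onb01 :: "(nat \<Rightarrow> real \<Rightarrow> real) \<Rightarrow> bool" where
  "onb01 \<psi> \<longleftrightarrow>
     (\<forall>j\<ge>1. \<psi> j \<in> borel_measurable borel
             \<and> set_integrable lborel {0..1} (\<lambda>x. (\<psi> j x)\<^sup>2)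
             \<and> (\<integral>x\<in>{0..1}. \<psi> j x \<partial>lborel) = 0
             \<and> (\<forall>l\<ge>1. (\<integral>x\<in>{0..1}. \<psi> j x * \<psi> l x \<partial>lborel) = (if j = l then 1 else 0))) \<and>
     (\<forall>f. f \<in> borel_measurable borel \<and> set_integrable lborel {0..1} (\<lambda>x. (f x)\<^sup>2) \<longrightarrow>
        (\<lambda>N. \<integral>x\<in>{0..1}. (f x - (\<integral>s\<in>{0..1}. f s \<partial>lborel)
             - (\<Sum>j=1..N. (\<integral>s\<in>{0..1}. f s * \<psi> j s \<partial>lborel) * \<psi> j x))\<^sup>2 \<partial>lborel)
          \<longlonglongrightarrow> 0)"

definition c0_of :: "(nat \<Rightarrow> real \<Rightarrow> real) \<Rightarrow> real" where
  "c0_of \<psi> = Sup {\<bar>\<psi> j x\<bar> | j x. j \<ge> 1 \<and> x \<in> {0..1}}"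

text \<open>Sobolev ellipsoid B(gamma,C); beta j is the j-th coefficient, j >= 1 (beta 0 unused).\<close>
definition sobolev_B :: "real \<Rightarrow> real \<Rightarrow> (nat \<Rightarrow> real) \<Rightarrow> bool" where
  "sobolev_B \<gamma> C \<beta> \<longleftrightarrow>
     summable (\<lambda>j. (\<beta> (Suc j))\<^sup>2 * real (Suc j) powr (2 * \<gamma>)) \<and>
     (\<Sum>j. (\<beta> (Suc j))\<^sup>2 * real (Suc j) powr (2 * \<gamma>)) \<le> C\<^sup>2"

definition sobolev_P :: "(nat \<Rightarrow> real \<Rightarrow> real) \<Rightarrow> real \<Rightarrow> real \<Rightarrow> (real \<Rightarrow> real) set" where
  "sobolev_P \<psi> \<gamma> C = {p. p \<in> borel_measurable borel \<and> (\<forall>x\<in>{0..1}. p x \<ge> 0)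
      \<and> set_integrable lborel {0..1} (\<lambda>x. (p x)\<^sup>2)
      \<and> (\<integral>x\<in>{0..1}. p x \<partial>lborel) = 1
      \<and> (\<exists>\<beta>. sobolev_B \<gamma> C \<beta> \<and>
           (\<lambda>N. \<integral>x\<in>{0..1}. (p x - 1 - (\<Sum>j=1..N. \<beta> j * \<psi> j x))\<^sup>2 \<partial>lborel) \<longlonglongrightarrow> 0)}"

definition m_of :: "real \<Rightarrow> nat \<Rightarrow> nat" where
  "m_of \<gamma> n = nat \<lfloor>real n powr (1 / (2 * \<gamma> + 1))\<rfloor>"

definition dens01 :: "(real \<Rightarrow> real) \<Rightarrow> real measure" where
  "dens01 f = density lborel (\<lambda>x. ennreal (indicator {0..1} x * f x))"

definition laplace_dist :: "real \<Rightarrow> real \<Rightarrow> nat \<Rightarrow> nat \<Rightarrow> real measure" where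
  "laplace_dist \<alpha> c0 n m = density lborel
     (\<lambda>v. ennreal (real n * \<alpha> / (2 * c0 * real m) * exp (- (real n * \<alpha> * \<bar>v\<bar>) / (c0 * real m))))"

definition qhat :: "(nat \<Rightarrow> real \<Rightarrow> real) \<Rightarrow> nat \<Rightarrow> nat \<Rightarrow> (nat \<Rightarrow> real) \<Rightarrow> (nat \<Rightarrow> real) \<Rightarrow> real \<Rightarrow> real" where
  "qhat \<psi> m n X \<nu> y = 1 + (\<Sum>j=1..m. ((\<Sum>i=1..n. \<psi> j (X i)) / real n + \<nu> j) * \<psi> j y)"

definition qcorr :: "(real \<Rightarrow> real) \<Rightarrow> real \<Rightarrow> real" where
  "qcorr q = (if \<exists>y\<in>{0..1}. q y < 0
      then (\<lambda>y. q y * indicator {s. q s > 0} y / (\<integral>s\<in>{0..1}. q s * indicator {s. q s > 0} s \<partial>lborel))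
      else q)"

definition joint_law :: "(nat \<Rightarrow> real \<Rightarrow> real) \<Rightarrow> real \<Rightarrow> real \<Rightarrow> (real \<Rightarrow> real) \<Rightarrow> nat \<Rightarrow> nat
     \<Rightarrow> ((nat \<Rightarrow> real) \<times> (nat \<Rightarrow> real) \<times> (nat \<Rightarrow> real)) measure" where
  "joint_law \<psi> \<alpha> \<gamma> p n k =
    bind (PiM {1..n} (\<lambda>_. dens01 p)) (\<lambda>X.
    bind (PiM {1..m_of \<gamma> n} (\<lambda>_. laplace_dist \<alpha> (c0_of \<psi>) n (m_of \<gamma> n))) (\<lambda>\<nu>.
    bind (PiM {1..k} (\<lambda>_. dens01 (qcorr (qhat \<psi> (m_of \<gamma> n) n X \<nu>)))) (\<lambda>Z.
    return (PiM {1..n} (\<lambda>_. borel) \<Otimes>\<^sub>M (PiM {1..m_of \<gamma> n} (\<lambda>_. borel) \<Otimes>\<^sub>M PiM {1..k} (\<lambda>_. borel)))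
           (X, \<nu>, Z))))"

definition phatZ :: "(nat \<Rightarrow> real \<Rightarrow> real) \<Rightarrow> nat \<Rightarrow> nat \<Rightarrow> (nat \<Rightarrow> real) \<Rightarrow> real \<Rightarrow> real" where
  "phatZ \<psi> m k Z y = 1 + (\<Sum>j=1..m. ((\<Sum>i=1..k. \<psi> j (Z i)) / real k) * \<psi> j y)"

definition L2err01 :: "(real \<Rightarrow> real) \<Rightarrow> (real \<Rightarrow> real) \<Rightarrow> real" where
  "L2err01 p f = (\<integral>x\<in>{0..1}. (p x - f x)\<^sup>2 \<partial>lborel)"

end

theory Submission
  imports Defs
begin

text \<open>
  Let beta_j be the basis coefficients of p and let
  b_j = k^-1 sum_i psi_j(Z_i) be those of the estimator.  By orthonormality the loss
  splits as  ||p - p_Z||^2 = bias(m) + sum_{j<=m} (b_j - beta_j)^2,  where the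
  truncation bias is at most C^2 m^(-2 gamma) by the Sobolev condition.
  Conditionally on the data X and the noise nu, the Z_i are i.i.d. from the
  corrected density q, so a variance computation together with Bessel's inequality
  bounds the conditional risk by  bias(m) + m c0^2/k + ||q - p||^2.  Taking the
  normalised positive part of qhat costs only a constant factor, and ||qhat - p||^2
  is again  bias(m) + sum_j (betahat_j + nu_j - beta_j)^2.  Integrating out the
  Laplace noise (second moment 2/lambda^2) and the sample X (variance <= c0^2/n)
  shows that the expected loss is O(n^(-2 gamma/(2 gamma + 1))) for
  m = floor(n^(1/(2 gamma + 1))); Markov's inequality then gives the O_P statement.
\<close>

section \<open>Square-integrable functions on the unit interval\<close>

text \<open>Lebesgue measure restricted to \<open>[0,1]\<close>, a probability space; all
  \<open>L\<^sub>2(0,1)\<close> computations are carried out with respect to it.\<close>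
definition U01 :: "real measure" where "U01 = restrict_space lborel {0..1}"

lemma space_U01 [simp]: "space U01 = {0..1}"
  by (simp add: U01_def space_restrict_space)

lemma measurable_U01: "f \<in> borel_measurable borel \<Longrightarrow> f \<in> borel_measurable U01"
  unfolding U01_def by (rule measurable_restrict_space1) simp

lemma prob_space_U01: "prob_space U01"
proof
  show "emeasure U01 (space U01) = 1"
    unfolding U01_def by (simp add: emeasure_restrict_space space_restrict_space)
qed

interpretation U01: prob_space U01 by (rule prob_space_U01)

lemma measure_U01 [simp]: "measure U01 {0..1} = 1"
  using U01.prob_space by simp

lemma set_integral_U01:
  fixes f :: "real \<Rightarrow> real" shows "(\<integral>x\<in>{0..1}. f x \<partial>lborel) = integral\<^sup>L U01 f"
  unfolding U01_def set_lebesgue_integral_def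
  by (subst integral_restrict_space) auto

lemma set_integrable_U01:
  fixes f :: "real \<Rightarrow> real" shows "set_integrable lborel {0..1} f \<longleftrightarrow> integrable U01 f"
  unfolding U01_def set_integrable_def
  by (subst integrable_restrict_space) auto

lemma L2_L1:
  fixes f :: "real \<Rightarrow> real"
  assumes "f \<in> borel_measurable U01" "integrable U01 (\<lambda>x. (f x)\<^sup>2)"
  shows "integrable U01 f"
proof (rule Bochner_Integration.integrable_bound[where f="\<lambda>x. 1 + (f x)\<^sup>2"])
  show "integrable U01 (\<lambda>x. 1 + (f x)\<^sup>2)" using assms by auto
  show "AE x in U01. norm (f x) \<le> norm (1 + (f x)\<^sup>2)"
  proof (intro AE_I2)
    fix x have "2 * \<bar>f x\<bar> * 1 \<le> \<bar>f x\<bar>\<^sup>2 + 1\<^sup>2"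
      by (rule sum_squares_bound)
    then show "norm (f x) \<le> norm (1 + (f x)\<^sup>2)" by simp
  qed
qed (use assms in auto)

lemma L2_mult:
  fixes f g :: "real \<Rightarrow> real"
  assumes "f \<in> borel_measurable U01" "integrable U01 (\<lambda>x. (f x)\<^sup>2)"
      "g \<in> borel_measurable U01" "integrable U01 (\<lambda>x. (g x)\<^sup>2)"
  shows "integrable U01 (\<lambda>x. f x * g x)"
proof (rule Bochner_Integration.integrable_bound[where f="\<lambda>x. (f x)\<^sup>2 + (g x)\<^sup>2"])
  show "integrable U01 (\<lambda>x. (f x)\<^sup>2 + (g x)\<^sup>2)" using assms by auto
  show "AE x in U01. norm (f x * g x) \<le> norm ((f x)\<^sup>2 + (g x)\<^sup>2)"
  proof (intro AE_I2)
    fix x have "2 * \<bar>f x * g x\<bar> \<le> (f x)\<^sup>2 + (g x)\<^sup>2"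
      using sum_squares_bound[of "\<bar>f x\<bar>" "\<bar>g x\<bar>"] by (simp add: abs_mult power2_abs)
    then show "norm (f x * g x) \<le> norm ((f x)\<^sup>2 + (g x)\<^sup>2)" by simp
  qed
qed (use assms in auto)

lemma L2_add:
  fixes f g :: "real \<Rightarrow> real"
  assumes "f \<in> borel_measurable U01" "integrable U01 (\<lambda>x. (f x)\<^sup>2)"
      "g \<in> borel_measurable U01" "integrable U01 (\<lambda>x. (g x)\<^sup>2)"
  shows "integrable U01 (\<lambda>x. (f x + g x)\<^sup>2)"
proof -
  have "integrable U01 (\<lambda>x. ((f x)\<^sup>2 + (g x)\<^sup>2) + 2 * (f x * g x))"
    using assms L2_mult[OF assms] by auto
  then show ?thesis by (simp add: power2_sum mult.assoc)
qed

lemma L2_diff: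
  fixes f g :: "real \<Rightarrow> real"
  assumes "f \<in> borel_measurable U01" "integrable U01 (\<lambda>x. (f x)\<^sup>2)"
      "g \<in> borel_measurable U01" "integrable U01 (\<lambda>x. (g x)\<^sup>2)"
  shows "integrable U01 (\<lambda>x. (f x - g x)\<^sup>2)"
  using L2_add[of f "\<lambda>x. - g x"] assms by simp

lemma L2_sum:
  fixes g :: "nat \<Rightarrow> real \<Rightarrow> real"
  assumes "finite J" "\<And>j. j \<in> J \<Longrightarrow> g j \<in> borel_measurable U01"
     "\<And>j. j \<in> J \<Longrightarrow> integrable U01 (\<lambda>x. (g j x)\<^sup>2)"
  shows "integrable U01 (\<lambda>x. (\<Sum>j\<in>J. g j x)\<^sup>2)"
  using assms
proof (induction J rule: finite_induct)
  case empty then show ?case by simp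
next
  case (insert a J)
  then show ?case by (simp add: sum.insert) (rule L2_add, auto)
qed

lemma L2_bounded:
  fixes f :: "real \<Rightarrow> real"
  assumes "f \<in> borel_measurable U01" "\<And>x. x \<in> {0..1} \<Longrightarrow> \<bar>f x\<bar> \<le> B"
  shows "integrable U01 (\<lambda>x. (f x)\<^sup>2)"
proof (rule Bochner_Integration.integrable_bound[where f="\<lambda>x. B\<^sup>2"])
  show "AE x in U01. norm ((f x)\<^sup>2) \<le> norm (B\<^sup>2)"
  proof (intro AE_I2)
    fix x assume "x \<in> space U01"
    then have "\<bar>f x\<bar>\<^sup>2 \<le> B\<^sup>2" using assms by (intro power_mono) auto
    then show "norm ((f x)\<^sup>2) \<le> norm (B\<^sup>2)" by simp
  qed
qed (use assms in auto)

lemma square_of_integral_le: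
  fixes f :: "real \<Rightarrow> real"
  assumes "f \<in> borel_measurable U01" "integrable U01 (\<lambda>x. (f x)\<^sup>2)"
  shows "(integral\<^sup>L U01 f)\<^sup>2 \<le> integral\<^sup>L U01 (\<lambda>x. (f x)\<^sup>2)"
proof -
  have i: "integrable U01 f" using L2_L1 assms .
  let ?a = "integral\<^sup>L U01 f"
  have "0 \<le> integral\<^sup>L U01 (\<lambda>x. (f x - ?a)\<^sup>2)" by (intro integral_nonneg_AE) auto
  also have "integral\<^sup>L U01 (\<lambda>x. (f x - ?a)\<^sup>2) = integral\<^sup>L U01 (\<lambda>x. (f x)\<^sup>2 - 2 * ?a * f x + ?a\<^sup>2)"
    by (simp add: power2_diff algebra_simps)
  also have "\<dots> = integral\<^sup>L U01 (\<lambda>x. (f x)\<^sup>2) - 2 * ?a * ?a + ?a\<^sup>2"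
    using i assms by (simp add: U01.prob_space)
  finally show ?thesis by (simp add: power2_eq_square)
qed

section \<open>Bounded orthonormal systems\<close>

locale bounded_onb =
  fixes \<psi> :: "nat \<Rightarrow> real \<Rightarrow> real" and c0 :: real
  assumes psi_meas: "\<And>j. j \<ge> 1 \<Longrightarrow> \<psi> j \<in> borel_measurable borel"
    and psi_bnd: "\<And>j x. j \<ge> 1 \<Longrightarrow> x \<in> {0..1} \<Longrightarrow> \<bar>\<psi> j x\<bar> \<le> c0"
    and psi_orth: "\<And>j l. j \<ge> 1 \<Longrightarrow> l \<ge> 1 \<Longrightarrow>
          integral\<^sup>L U01 (\<lambda>x. \<psi> j x * \<psi> l x) = (if j = l then 1 else 0)"
    and psi_mean: "\<And>j. j \<ge> 1 \<Longrightarrow> integral\<^sup>L U01 (\<psi> j) = 0"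
begin

lemma psi_meas_U01: "j \<ge> 1 \<Longrightarrow> \<psi> j \<in> borel_measurable U01"
  using psi_meas measurable_U01 by blast

lemma psi_L2: "j \<ge> 1 \<Longrightarrow> integrable U01 (\<lambda>x. (\<psi> j x)\<^sup>2)"
  by (rule L2_bounded[OF psi_meas_U01 psi_bnd])

lemma psi_integrable: "j \<ge> 1 \<Longrightarrow> integrable U01 (\<psi> j)"
  by (rule L2_L1[OF psi_meas_U01 psi_L2])

lemma psi_mult_integrable:
  fixes f :: "real \<Rightarrow> real"
  assumes "f \<in> borel_measurable U01" "integrable U01 (\<lambda>x. (f x)\<^sup>2)" "j \<ge> 1"
  shows "integrable U01 (\<lambda>x. f x * \<psi> j x)"
  by (rule L2_mult[OF assms(1,2) psi_meas_U01 psi_L2]) (use assms in auto)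

text \<open>The bound \<open>c0\<close> is positive, since \<open>\<psi>\<^sub>1\<close> has norm one.\<close>
lemma c0_pos: "0 < c0"
proof (rule ccontr)
  assume "\<not> 0 < c0"
  then have "\<psi> 1 x * \<psi> 1 x = 0" if "x \<in> space U01" for x
    using psi_bnd[of 1 x] that by (simp add: abs_le_iff)
  then have "integral\<^sup>L U01 (\<lambda>x. \<psi> 1 x * \<psi> 1 x) = integral\<^sup>L U01 (\<lambda>x. 0)"
    by (intro Bochner_Integration.integral_cong) auto
  then show False using psi_orth[of 1 1] by simp
qed

lemma series_meas:
  assumes "\<forall>j\<in>J. j \<ge> 1"
  shows "(\<lambda>x. \<Sum>j\<in>J. c j * \<psi> j x) \<in> borel_measurable U01"
  by (intro borel_measurable_sum borel_measurable_times borel_measurable_const psi_meas_U01)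
     (use assms in auto)

lemma series_meas_borel: "(\<lambda>x. \<Sum>j\<in>{1..m}. c j * \<psi> j x) \<in> borel_measurable borel"
  by (intro borel_measurable_sum borel_measurable_times borel_measurable_const psi_meas) auto

lemma series_L2:
  assumes "finite J" "\<forall>j\<in>J. j \<ge> 1"
  shows "integrable U01 (\<lambda>x. (\<Sum>j\<in>J. c j * \<psi> j x)\<^sup>2)"
proof (rule L2_sum[OF assms(1)])
  fix j assume j: "j \<in> J"
  then show "(\<lambda>x. c j * \<psi> j x) \<in> borel_measurable U01" using assms psi_meas_U01 by auto
  have "integrable U01 (\<lambda>x. (c j)\<^sup>2 * (\<psi> j x)\<^sup>2)" using j assms psi_L2 by auto
  then show "integrable U01 (\<lambda>x. (c j * \<psi> j x)\<^sup>2)" by (simp add: power_mult_distrib)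
qed

lemma L2_dist_series:
  fixes f :: "real \<Rightarrow> real"
  assumes f: "f \<in> borel_measurable U01" "integrable U01 (\<lambda>x. (f x)\<^sup>2)"
    and J: "finite J" "\<forall>j\<in>J. j \<ge> 1"
  shows "integral\<^sup>L U01 (\<lambda>x. (f x - (\<Sum>j\<in>J. c j * \<psi> j x))\<^sup>2) =
      integral\<^sup>L U01 (\<lambda>x. (f x)\<^sup>2) - 2 * (\<Sum>j\<in>J. c j * integral\<^sup>L U01 (\<lambda>x. f x * \<psi> j x))
      + (\<Sum>j\<in>J. (c j)\<^sup>2)"
proof -
  have pointwise: "(f x - (\<Sum>j\<in>J. c j * \<psi> j x))\<^sup>2 = (f x)\<^sup>2 - 2 * (\<Sum>j\<in>J. c j * (f x * \<psi> j x))
       + (\<Sum>j\<in>J. \<Sum>l\<in>J. c j * c l * (\<psi> j x * \<psi> l x))" for x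
    by (simp add: power2_eq_square algebra_simps sum_distrib_left sum_product)
  have int_f_psi: "\<And>j. j \<in> J \<Longrightarrow> integrable U01 (\<lambda>x. f x * \<psi> j x)"
    using psi_mult_integrable[OF f] J by auto
  have int_psi_psi: "\<And>j l. j \<in> J \<Longrightarrow> l \<in> J \<Longrightarrow> integrable U01 (\<lambda>x. \<psi> j x * \<psi> l x)"
    using psi_mult_integrable[OF psi_meas_U01 psi_L2] J by auto
  have "integral\<^sup>L U01 (\<lambda>x. (f x - (\<Sum>j\<in>J. c j * \<psi> j x))\<^sup>2) =
     integral\<^sup>L U01 (\<lambda>x. (f x)\<^sup>2) - 2 * (\<Sum>j\<in>J. c j * integral\<^sup>L U01 (\<lambda>x. f x * \<psi> j x))
       + (\<Sum>j\<in>J. \<Sum>l\<in>J. c j * c l * integral\<^sup>L U01 (\<lambda>x. \<psi> j x * \<psi> l x))"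
    unfolding pointwise using f int_f_psi int_psi_psi
    by (simp add: Bochner_Integration.integral_diff Bochner_Integration.integral_add
        Bochner_Integration.integrable_diff Bochner_Integration.integrable_add
        Bochner_Integration.integral_sum integral_mult_right_zero)
  also have "(\<Sum>j\<in>J. \<Sum>l\<in>J. c j * c l * integral\<^sup>L U01 (\<lambda>x. \<psi> j x * \<psi> l x)) = (\<Sum>j\<in>J. (c j)\<^sup>2)"
  proof (rule sum.cong[OF refl])
    fix j assume j: "j \<in> J"
    have "(\<Sum>l\<in>J. c j * c l * integral\<^sup>L U01 (\<lambda>x. \<psi> j x * \<psi> l x)) = (\<Sum>l\<in>J. if j = l then c j * c l else 0)"
      using J j by (intro sum.cong) (auto simp: psi_orth)
    also have "\<dots> = (c j)\<^sup>2" using J j by (simp add: power2_eq_square)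
    finally show "(\<Sum>l\<in>J. c j * c l * integral\<^sup>L U01 (\<lambda>x. \<psi> j x * \<psi> l x)) = (c j)\<^sup>2" .
  qed
  finally show ?thesis .
qed

lemma bessel_inequality:
  fixes f :: "real \<Rightarrow> real"
  assumes f: "f \<in> borel_measurable U01" "integrable U01 (\<lambda>x. (f x)\<^sup>2)"
    and J: "finite J" "\<forall>j\<in>J. j \<ge> 1"
  shows "(\<Sum>j\<in>J. (integral\<^sup>L U01 (\<lambda>x. f x * \<psi> j x))\<^sup>2) \<le> integral\<^sup>L U01 (\<lambda>x. (f x)\<^sup>2)"
proof -
  let ?c = "\<lambda>j. integral\<^sup>L U01 (\<lambda>x. f x * \<psi> j x)"
  have "0 \<le> integral\<^sup>L U01 (\<lambda>x. (f x - (\<Sum>j\<in>J. ?c j * \<psi> j x))\<^sup>2)"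
    by (intro integral_nonneg_AE) auto
  also have "\<dots> = integral\<^sup>L U01 (\<lambda>x. (f x)\<^sup>2) - (\<Sum>j\<in>J. (?c j)\<^sup>2)"
    unfolding L2_dist_series[OF f J] by (simp add: sum_distrib_left power2_eq_square)
  finally show ?thesis by simp
qed

lemma coefficient_of_series:
  assumes J: "finite J" "\<forall>j\<in>J. j \<ge> 1" and l: "l \<ge> 1"
  shows "integral\<^sup>L U01 (\<lambda>x. (\<Sum>j\<in>J. c j * \<psi> j x) * \<psi> l x) = (if l \<in> J then c l else 0)"
proof -
  have "integral\<^sup>L U01 (\<lambda>x. (\<Sum>j\<in>J. c j * \<psi> j x) * \<psi> l x) =
        integral\<^sup>L U01 (\<lambda>x. (\<Sum>j\<in>J. c j * (\<psi> j x * \<psi> l x)))"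
    by (simp add: sum_distrib_right mult.assoc)
  also have "\<dots> = (\<Sum>j\<in>J. c j * integral\<^sup>L U01 (\<lambda>x. \<psi> j x * \<psi> l x))"
    using J l psi_mult_integrable[OF psi_meas_U01 psi_L2]
    by (subst Bochner_Integration.integral_sum) auto
  also have "\<dots> = (\<Sum>j\<in>J. if j = l then c l else 0)"
    using J l by (intro sum.cong) (auto simp: psi_orth)
  also have "\<dots> = (if l \<in> J then c l else 0)" using J by (simp add: sum.delta')
  finally show ?thesis .
qed

lemma unit_series_facts:
  fixes d :: "nat \<Rightarrow> real" and m :: nat
  defines "q \<equiv> \<lambda>y. 1 + (\<Sum>j=1..m. d j * \<psi> j y)"
  shows "q \<in> borel_measurable borel" "integrable U01 (\<lambda>y. (q y)\<^sup>2)" "integral\<^sup>L U01 q = 1"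
proof -
  show "q \<in> borel_measurable borel" unfolding q_def using series_meas_borel by measurable
  have J: "finite {1..m}" "\<forall>j\<in>{1..m}. j \<ge> 1" by auto
  show "integrable U01 (\<lambda>y. (q y)\<^sup>2)" unfolding q_def
    by (rule L2_add) (use series_meas[OF J(2)] series_L2[OF J] in auto)
  have "integral\<^sup>L U01 (\<lambda>y. \<Sum>j=1..m. d j * \<psi> j y) = (\<Sum>j=1..m. d j * integral\<^sup>L U01 (\<psi> j))"
    using psi_integrable by (subst Bochner_Integration.integral_sum) auto
  moreover have "integrable U01 (\<lambda>y. \<Sum>j=1..m. d j * \<psi> j y)"
    using psi_integrable by auto
  ultimately show "integral\<^sup>L U01 q = 1"
    unfolding q_def by (simp add: psi_mean)
qed

end

section \<open>Densities in a Sobolev class\<close>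

locale sobolev_density = bounded_onb +
  fixes p :: "real \<Rightarrow> real" and \<beta> :: "nat \<Rightarrow> real" and \<gamma> C :: real
  assumes p_meas: "p \<in> borel_measurable borel"
    and p_nonneg: "\<And>x. x \<in> {0..1} \<Longrightarrow> 0 \<le> p x"
    and p_L2: "integrable U01 (\<lambda>x. (p x)\<^sup>2)"
    and p_int1: "integral\<^sup>L U01 p = 1"
    and sobB: "sobolev_B \<gamma> C \<beta>"
    and conv: "(\<lambda>N. integral\<^sup>L U01 (\<lambda>x. (p x - 1 - (\<Sum>j=1..N. \<beta> j * \<psi> j x))\<^sup>2)) \<longlonglongrightarrow> 0"
    and gamma_pos: "\<gamma> > 0"
begin

lemma p_meas_U01: "p \<in> borel_measurable U01" using p_meas measurable_U01 by blast

lemma p_integrable: "integrable U01 p" using L2_L1[OF p_meas_U01 p_L2] .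

lemma p1_L2: "integrable U01 (\<lambda>x. (p x - 1)\<^sup>2)"
  using L2_diff[OF p_meas_U01 p_L2, of "\<lambda>_. 1"] by simp

lemma p_psi_integrable: "j \<ge> 1 \<Longrightarrow> integrable U01 (\<lambda>x. p x * \<psi> j x)"
  using psi_mult_integrable[OF p_meas_U01 p_L2] .

text \<open>The \<open>\<beta>\<^sub>j\<close> are the Fourier coefficients of \<open>p\<close>: the coefficient of
  \<open>p - 1 - \<Sum>\<^sub>j\<^sub>\<le>\<^sub>N \<beta>\<^sub>j\<psi>\<^sub>j\<close> along \<open>\<psi>\<^sub>j\<close> is \<open>\<langle>p,\<psi>\<^sub>j\<rangle> - \<beta>\<^sub>j\<close> for \<open>N \<ge> j\<close>, and by
  Bessel's inequality it is dominated by the vanishing \<open>L\<^sub>2\<close> remainder.\<close>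
lemma coefficient_eq: assumes j: "j \<ge> 1" shows "\<beta> j = integral\<^sup>L U01 (\<lambda>x. p x * \<psi> j x)"
proof -
  let ?g = "\<lambda>N x. p x - 1 - (\<Sum>j=1..N. \<beta> j * \<psi> j x)"
  let ?d = "integral\<^sup>L U01 (\<lambda>x. p x * \<psi> j x) - \<beta> j"
  have "?d\<^sup>2 \<le> 0"
  proof (rule LIMSEQ_le_const[OF conv], intro exI allI impI)
    fix N assume N: "j \<le> N"
    have S: "(\<lambda>x. \<Sum>l=1..N. \<beta> l * \<psi> l x) \<in> borel_measurable U01"
        "integrable U01 (\<lambda>x. (\<Sum>l=1..N. \<beta> l * \<psi> l x)\<^sup>2)"
      using series_meas[of "{1..N}" \<beta>] series_L2[of "{1..N}" \<beta>] by auto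
    have g_meas: "?g N \<in> borel_measurable U01" using p_meas_U01 S(1) by auto
    have g_L2: "integrable U01 (\<lambda>x. (?g N x)\<^sup>2)"
      using L2_diff[OF _ p1_L2 S] p_meas_U01 by auto
    have "integral\<^sup>L U01 (\<lambda>x. ?g N x * \<psi> j x) =
       integral\<^sup>L U01 (\<lambda>x. p x * \<psi> j x - \<psi> j x - (\<Sum>l=1..N. \<beta> l * \<psi> l x) * \<psi> j x)"
      by (simp add: algebra_simps)
    also have "\<dots> = integral\<^sup>L U01 (\<lambda>x. p x * \<psi> j x) - integral\<^sup>L U01 (\<psi> j)
        - integral\<^sup>L U01 (\<lambda>x. (\<Sum>l=1..N. \<beta> l * \<psi> l x) * \<psi> j x)"
      using p_psi_integrable[OF j] psi_integrable[OF j] psi_mult_integrable[OF S j] by simp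
    also have "\<dots> = ?d" using j N by (simp add: coefficient_of_series psi_mean)
    finally have "?d\<^sup>2 = (\<Sum>l\<in>{j}. (integral\<^sup>L U01 (\<lambda>x. ?g N x * \<psi> l x))\<^sup>2)" by simp
    also have "\<dots> \<le> integral\<^sup>L U01 (\<lambda>x. (?g N x)\<^sup>2)"
      by (rule bessel_inequality[OF g_meas g_L2]) (use j in auto)
    finally show "?d\<^sup>2 \<le> integral\<^sup>L U01 (\<lambda>x. (?g N x)\<^sup>2)" .
  qed
  then show ?thesis by simp
qed

lemma centred_coefficient_eq:
  assumes j: "j \<ge> 1" shows "integral\<^sup>L U01 (\<lambda>x. (p x - 1) * \<psi> j x) = \<beta> j"
proof -
  have "integral\<^sup>L U01 (\<lambda>x. (p x - 1) * \<psi> j x) = integral\<^sup>L U01 (\<lambda>x. p x * \<psi> j x - \<psi> j x)"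
    by (simp add: algebra_simps)
  also have "\<dots> = \<beta> j"
    using p_psi_integrable[OF j] psi_integrable[OF j] coefficient_eq[OF j] psi_mean[OF j] by simp
  finally show ?thesis .
qed

definition bias :: "nat \<Rightarrow> real" where
  "bias m = integral\<^sup>L U01 (\<lambda>x. (p x - 1 - (\<Sum>j=1..m. \<beta> j * \<psi> j x))\<^sup>2)"

lemma bias_nonneg: "0 \<le> bias m" unfolding bias_def by (intro integral_nonneg_AE) auto

lemma series_loss:
  "integral\<^sup>L U01 (\<lambda>x. (p x - 1 - (\<Sum>j=1..m. c j * \<psi> j x))\<^sup>2) = bias m + (\<Sum>j=1..m. (c j - \<beta> j)\<^sup>2)"
proof -
  have J: "finite {1..m}" "\<forall>j\<in>{1..m}. j \<ge> 1" by auto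
  have expand: "integral\<^sup>L U01 (\<lambda>x. (p x - 1 - (\<Sum>j=1..m. c j * \<psi> j x))\<^sup>2) =
     integral\<^sup>L U01 (\<lambda>x. (p x - 1)\<^sup>2) - 2 * (\<Sum>j=1..m. c j * \<beta> j) + (\<Sum>j=1..m. (c j)\<^sup>2)" for c
  proof -
    have "(\<Sum>j=1..m. c j * integral\<^sup>L U01 (\<lambda>x. (p x - 1) * \<psi> j x)) = (\<Sum>j=1..m. c j * \<beta> j)"
      by (intro sum.cong) (auto simp: centred_coefficient_eq)
    then show ?thesis using L2_dist_series[OF _ p1_L2 J, of c] p_meas_U01 by simp
  qed
  show ?thesis unfolding bias_def expand
    by (simp add: power2_diff sum.distrib sum_subtractf sum_distrib_left power2_eq_square algebra_simps)
qed

lemma bias_eq: "bias m = integral\<^sup>L U01 (\<lambda>x. (p x - 1)\<^sup>2) - (\<Sum>j=1..m. (\<beta> j)\<^sup>2)"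
  using series_loss[where c="\<lambda>_. 0" and m=m] by simp

lemma parseval_partial_sums: "(\<lambda>N. \<Sum>j=1..N. (\<beta> j)\<^sup>2) \<longlonglongrightarrow> integral\<^sup>L U01 (\<lambda>x. (p x - 1)\<^sup>2)"
proof -
  have "(\<lambda>N. integral\<^sup>L U01 (\<lambda>x. (p x - 1)\<^sup>2) - bias N) \<longlonglongrightarrow> integral\<^sup>L U01 (\<lambda>x. (p x - 1)\<^sup>2) - 0"
    using conv unfolding bias_def[symmetric] by (intro tendsto_intros)
  then show ?thesis by (simp add: bias_eq)
qed

lemma sobolev_partial_sum_bound: "(\<Sum>j=1..N. (\<beta> j)\<^sup>2 * real j powr (2 * \<gamma>)) \<le> C\<^sup>2"
proof -
  have s: "summable (\<lambda>j. (\<beta> (Suc j))\<^sup>2 * real (Suc j) powr (2 * \<gamma>))"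
    and le: "(\<Sum>j. (\<beta> (Suc j))\<^sup>2 * real (Suc j) powr (2 * \<gamma>)) \<le> C\<^sup>2"
    using sobB unfolding sobolev_B_def by auto
  have "(\<Sum>j=1..N. (\<beta> j)\<^sup>2 * real j powr (2 * \<gamma>)) = (\<Sum>j<N. (\<beta> (Suc j))\<^sup>2 * real (Suc j) powr (2 * \<gamma>))"
    by (rule sum_bounds_lt_plus1[symmetric])
  also have "\<dots> \<le> (\<Sum>j. (\<beta> (Suc j))\<^sup>2 * real (Suc j) powr (2 * \<gamma>))"
    by (rule sum_le_suminf[OF s]) auto
  finally show ?thesis using le by linarith
qed

text \<open>\<open>\<parallel>p\<parallel>\<^sup>2 = 1 + \<Sum>\<^sub>j \<beta>\<^sub>j\<^sup>2 \<le> 1 + C\<^sup>2\<close>; needed for the positive-part correction.\<close>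
lemma density_L2_norm: "integral\<^sup>L U01 (\<lambda>x. (p x)\<^sup>2) \<le> 1 + C\<^sup>2"
proof -
  have "integral\<^sup>L U01 (\<lambda>x. (p x - 1)\<^sup>2) \<le> C\<^sup>2"
  proof (rule LIMSEQ_le_const2[OF parseval_partial_sums], intro exI allI impI)
    fix N :: nat
    have "(\<Sum>j=1..N. (\<beta> j)\<^sup>2) \<le> (\<Sum>j=1..N. (\<beta> j)\<^sup>2 * real j powr (2 * \<gamma>))"
    proof (rule sum_mono)
      fix j assume "j \<in> {1..N}"
      then have "1 \<le> real j powr (2 * \<gamma>)" using gamma_pos by (intro ge_one_powr_ge_zero) auto
      from mult_left_mono[OF this zero_le_power2[of "\<beta> j"]]
      show "(\<beta> j)\<^sup>2 \<le> (\<beta> j)\<^sup>2 * real j powr (2 * \<gamma>)" by simp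
    qed
    then show "(\<Sum>j=1..N. (\<beta> j)\<^sup>2) \<le> C\<^sup>2" using sobolev_partial_sum_bound[of N] by linarith
  qed
  moreover have "integral\<^sup>L U01 (\<lambda>x. (p x - 1)\<^sup>2) = integral\<^sup>L U01 (\<lambda>x. (p x)\<^sup>2 - 2 * p x + 1)"
    by (rule Bochner_Integration.integral_cong) (auto simp: power2_diff)
  moreover have "\<dots> = integral\<^sup>L U01 (\<lambda>x. (p x)\<^sup>2) - 1"
    using p_L2 p_integrable p_int1 by (simp add: U01.prob_space)
  ultimately show ?thesis by linarith
qed

text \<open>The Sobolev bias bound \<open>bias(m) \<le> C\<^sup>2 m\<^sup>-\<^sup>2\<^sup>\<gamma>\<close>: the tail
  \<open>\<Sum>\<^sub>j\<^sub>>\<^sub>m \<beta>\<^sub>j\<^sup>2 \<le> m\<^sup>-\<^sup>2\<^sup>\<gamma> \<Sum>\<^sub>j\<^sub>>\<^sub>m \<beta>\<^sub>j\<^sup>2 j\<^sup>2\<^sup>\<gamma>\<close>.\<close>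
lemma bias_bound:
  assumes m: "m \<ge> 1"
  shows "bias m \<le> C\<^sup>2 / real m powr (2 * \<gamma>)"
proof -
  have mp: "0 < real m powr (2 * \<gamma>)" using m by simp
  have "(\<lambda>N. (\<Sum>j=1..N. (\<beta> j)\<^sup>2) - (\<Sum>j=1..m. (\<beta> j)\<^sup>2)) \<longlonglongrightarrow> bias m"
    unfolding bias_eq by (intro tendsto_intros parseval_partial_sums)
  then show ?thesis
  proof (rule LIMSEQ_le_const2, intro exI allI impI)
    fix N assume N: "m \<le> N"
    have split: "{1..N} = {1..m} \<union> {m<..N}" using N m by auto
    have "(\<Sum>j=1..N. (\<beta> j)\<^sup>2) - (\<Sum>j=1..m. (\<beta> j)\<^sup>2) = (\<Sum>j\<in>{m<..N}. (\<beta> j)\<^sup>2)"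
      unfolding split by (subst sum.union_disjoint) (auto simp del: atLeastAtMost_iff greaterThanAtMost_iff, auto)
    also have "\<dots> \<le> (\<Sum>j\<in>{m<..N}. (\<beta> j)\<^sup>2 * real j powr (2 * \<gamma>) / real m powr (2 * \<gamma>))"
    proof (rule sum_mono)
      fix j assume j: "j \<in> {m<..N}"
      have "real m powr (2 * \<gamma>) \<le> real j powr (2 * \<gamma>)"
        using j m gamma_pos by (intro powr_mono2) auto
      then have "(\<beta> j)\<^sup>2 * 1 \<le> (\<beta> j)\<^sup>2 * (real j powr (2 * \<gamma>) / real m powr (2 * \<gamma>))"
        using mp by (intro mult_left_mono) auto
      then show "(\<beta> j)\<^sup>2 \<le> (\<beta> j)\<^sup>2 * real j powr (2 * \<gamma>) / real m powr (2 * \<gamma>)" by simp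
    qed
    also have "\<dots> = (\<Sum>j\<in>{m<..N}. (\<beta> j)\<^sup>2 * real j powr (2 * \<gamma>)) / real m powr (2 * \<gamma>)"
      by (simp add: sum_divide_distrib)
    also have "\<dots> \<le> C\<^sup>2 / real m powr (2 * \<gamma>)"
    proof (rule divide_right_mono)
      have "(\<Sum>j\<in>{m<..N}. (\<beta> j)\<^sup>2 * real j powr (2 * \<gamma>)) \<le> (\<Sum>j=1..N. (\<beta> j)\<^sup>2 * real j powr (2 * \<gamma>))"
        using m by (intro sum_mono2) auto
      then show "(\<Sum>j\<in>{m<..N}. (\<beta> j)\<^sup>2 * real j powr (2 * \<gamma>)) \<le> C\<^sup>2"
        using sobolev_partial_sum_bound[of N] by linarith
    qed (use mp in auto)
    finally show "(\<Sum>j=1..N. (\<beta> j)\<^sup>2) - (\<Sum>j=1..m. (\<beta> j)\<^sup>2) \<le> C\<^sup>2 / real m powr (2 * \<gamma>)" .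
  qed
qed

lemma unit_series_dist:
  "integral\<^sup>L U01 (\<lambda>y. (1 + (\<Sum>j=1..m. d j * \<psi> j y) - p y)\<^sup>2) = bias m + (\<Sum>j=1..m. (d j - \<beta> j)\<^sup>2)"
proof -
  have "(1 + (\<Sum>j=1..m. d j * \<psi> j y) - p y)\<^sup>2 = (p y - 1 - (\<Sum>j=1..m. d j * \<psi> j y))\<^sup>2" for y
    by (simp add: power2_commute diff_diff_eq)
  then show ?thesis using series_loss[where c=d and m=m] by simp
qed

end

section \<open>Empirical means under product measures\<close>

lemma product_sigma_finite_prob: "prob_space Q \<Longrightarrow> product_sigma_finite (\<lambda>_::nat. Q)"
  unfolding product_sigma_finite_def using prob_space_imp_sigma_finite by blast

lemma bounded_integrable:
  fixes h :: "real \<Rightarrow> real"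
  assumes "prob_space Q" "h \<in> borel_measurable Q" "AE x in Q. \<bar>h x\<bar> \<le> B"
  shows "integrable Q h"
proof -
  interpret Q: prob_space Q by fact
  show ?thesis
    by (rule Bochner_Integration.integrable_bound[where f="\<lambda>_. B"]) (use assms in auto)
qed

lemma integral_PiM_coordinate:
  fixes u :: "real \<Rightarrow> real" and I :: "nat set"
  assumes Q: "prob_space Q" and I: "finite I" "i \<in> I" and u: "integrable Q u"
  shows "integrable (PiM I (\<lambda>_. Q)) (\<lambda>z. u (z i))"
    "integral\<^sup>L (PiM I (\<lambda>_. Q)) (\<lambda>z. u (z i)) = integral\<^sup>L Q u"
proof -
  interpret Q: prob_space Q by fact
  interpret P: product_sigma_finite "\<lambda>_::nat. Q" by (rule product_sigma_finite_prob[OF Q])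
  define F where "F = (\<lambda>t. if t = i then u else (\<lambda>_. 1::real))"
  have eq: "\<And>z. (\<Prod>t\<in>I. F t (z t)) = u (z i)"
    using I by (subst prod.remove[of I i]) (auto simp: F_def)
  have ints: "\<And>t. t \<in> I \<Longrightarrow> integrable Q (F t)" using u by (auto simp: F_def)
  show "integrable (PiM I (\<lambda>_. Q)) (\<lambda>z. u (z i))"
    using P.product_integrable_prod[where f=F, OF I(1) ints] unfolding eq .
  have "integral\<^sup>L (PiM I (\<lambda>_. Q)) (\<lambda>z. (\<Prod>t\<in>I. F t (z t))) = (\<Prod>t\<in>I. integral\<^sup>L Q (F t))"
    by (rule P.product_integral_prod[OF I(1) ints])
  also have "\<dots> = integral\<^sup>L Q u"
    using I by (subst prod.remove[of I i]) (auto simp: Q.prob_space F_def)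
  finally show "integral\<^sup>L (PiM I (\<lambda>_. Q)) (\<lambda>z. u (z i)) = integral\<^sup>L Q u" unfolding eq .
qed

lemma integral_PiM_two_coordinates:
  fixes u v :: "real \<Rightarrow> real" and I :: "nat set"
  assumes Q: "prob_space Q" and I: "finite I" "i \<in> I" "l \<in> I" "i \<noteq> l"
    and u: "integrable Q u" and v: "integrable Q v"
  shows "integrable (PiM I (\<lambda>_. Q)) (\<lambda>z. u (z i) * v (z l))"
    "integral\<^sup>L (PiM I (\<lambda>_. Q)) (\<lambda>z. u (z i) * v (z l)) = integral\<^sup>L Q u * integral\<^sup>L Q v"
proof -
  interpret Q: prob_space Q by fact
  interpret P: product_sigma_finite "\<lambda>_::nat. Q" by (rule product_sigma_finite_prob[OF Q])
  define F where "F = (\<lambda>t. if t = i then u else if t = l then v else (\<lambda>_. 1::real))"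
  have split_prod: "(\<Prod>t\<in>I. G t) = G i * G l * (\<Prod>t\<in>I - {i} - {l}. G t)" for G :: "nat \<Rightarrow> real"
    using I by (simp add: prod.remove[of I i] prod.remove[of "I - {i}" l] mult.assoc)
  have eq: "\<And>z. (\<Prod>t\<in>I. F t (z t)) = u (z i) * v (z l)"
    unfolding split_prod using I by (simp add: F_def)
  have ints: "\<And>t. t \<in> I \<Longrightarrow> integrable Q (F t)" using u v by (auto simp: F_def)
  show "integrable (PiM I (\<lambda>_. Q)) (\<lambda>z. u (z i) * v (z l))"
    using P.product_integrable_prod[where f=F, OF I(1) ints] unfolding eq .
  have "integral\<^sup>L (PiM I (\<lambda>_. Q)) (\<lambda>z. (\<Prod>t\<in>I. F t (z t))) = (\<Prod>t\<in>I. integral\<^sup>L Q (F t))"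
    by (rule P.product_integral_prod[OF I(1) ints])
  also have "\<dots> = integral\<^sup>L Q u * integral\<^sup>L Q v"
    unfolding split_prod using I by (simp add: F_def Q.prob_space)
  finally show "integral\<^sup>L (PiM I (\<lambda>_. Q)) (\<lambda>z. u (z i) * v (z l)) = integral\<^sup>L Q u * integral\<^sup>L Q v"
    unfolding eq .
qed

lemma integral_PiM_pair_products:
  fixes g :: "real \<Rightarrow> real" and I :: "nat set"
  assumes Q: "prob_space Q" and I: "finite I" "i \<in> I" "l \<in> I"
    and g: "integrable Q g" "integrable Q (\<lambda>x. g x * g x)"
  shows "integrable (PiM I (\<lambda>_. Q)) (\<lambda>z. g (z i) * g (z l))"
    "integral\<^sup>L (PiM I (\<lambda>_. Q)) (\<lambda>z. g (z i) * g (z l))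
       = (if i = l then integral\<^sup>L Q (\<lambda>x. g x * g x) else (integral\<^sup>L Q g)\<^sup>2)"
  using integral_PiM_coordinate[OF Q I(1,2) g(2)] integral_PiM_two_coordinates[OF Q I(1-3) _ g(1) g(1)]
  by (cases "i = l"; simp add: power2_eq_square)+

lemma integral_PiM_double_sum:
  fixes g :: "real \<Rightarrow> real" and I :: "nat set"
  assumes Q: "prob_space Q" and I: "finite I"
    and g: "integrable Q g" "integrable Q (\<lambda>x. g x * g x)"
  defines "K \<equiv> real (card I)"
  shows "integrable (PiM I (\<lambda>_. Q)) (\<lambda>z. \<Sum>i\<in>I. \<Sum>l\<in>I. g (z i) * g (z l))"
    "integral\<^sup>L (PiM I (\<lambda>_. Q)) (\<lambda>z. \<Sum>i\<in>I. \<Sum>l\<in>I. g (z i) * g (z l))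
       = K * (integral\<^sup>L Q (\<lambda>x. g x * g x) + (K - 1) * (integral\<^sup>L Q g)\<^sup>2)"
proof -
  let ?a = "integral\<^sup>L Q (\<lambda>x. g x * g x)" and ?b = "(integral\<^sup>L Q g)\<^sup>2"
  note pair = integral_PiM_pair_products[OF Q I _ _ g]
  show "integrable (PiM I (\<lambda>_. Q)) (\<lambda>z. \<Sum>i\<in>I. \<Sum>l\<in>I. g (z i) * g (z l))"
    using pair(1) by (intro Bochner_Integration.integrable_sum) auto
  have row: "(\<Sum>l\<in>I. if i = l then ?a else ?b) = ?a + (K - 1) * ?b" if "i \<in> I" for i
  proof -
    have "(\<Sum>l\<in>I. if i = l then ?a else ?b) = (\<Sum>l\<in>I. ?b + (if i = l then ?a - ?b else 0))"
      by (intro sum.cong) auto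
    also have "\<dots> = ?a + (K - 1) * ?b" using I that unfolding K_def by (simp add: sum.distrib algebra_simps)
    finally show ?thesis .
  qed
  have "integral\<^sup>L (PiM I (\<lambda>_. Q)) (\<lambda>z. \<Sum>i\<in>I. \<Sum>l\<in>I. g (z i) * g (z l))
      = (\<Sum>i\<in>I. \<Sum>l\<in>I. if i = l then ?a else ?b)"
    using pair by (simp add: Bochner_Integration.integral_sum Bochner_Integration.integrable_sum)
  also have "\<dots> = K * (?a + (K - 1) * ?b)" using row unfolding K_def by simp
  finally show "integral\<^sup>L (PiM I (\<lambda>_. Q)) (\<lambda>z. \<Sum>i\<in>I. \<Sum>l\<in>I. g (z i) * g (z l))
       = K * (?a + (K - 1) * ?b)" .
qed

lemma empirical_mean_mse:
  fixes h :: "real \<Rightarrow> real" and I :: "nat set"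
  assumes Q: "prob_space Q" and hm: "h \<in> borel_measurable Q" and hb: "AE x in Q. \<bar>h x\<bar> \<le> B"
    and I: "finite I" "I \<noteq> {}"
  shows "integrable (PiM I (\<lambda>_. Q)) (\<lambda>z. ((\<Sum>i\<in>I. h (z i)) / real (card I) - t)\<^sup>2)"
    "integral\<^sup>L (PiM I (\<lambda>_. Q)) (\<lambda>z. ((\<Sum>i\<in>I. h (z i)) / real (card I) - t)\<^sup>2)
       \<le> B\<^sup>2 / real (card I) + (integral\<^sup>L Q h - t)\<^sup>2"
proof -
  interpret Q: prob_space Q by fact
  let ?K = "real (card I)" and ?P = "PiM I (\<lambda>_. Q)"
  have K: "?K > 0" using I by (simp add: card_gt_0_iff)
  define g where "g x = h x - t" for x
  have hi: "integrable Q h" by (rule bounded_integrable[OF Q hm hb])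
  have hbb: "AE x in Q. \<bar>h x * h x\<bar> \<le> B * B"
    using hb by eventually_elim (subst abs_mult, rule mult_mono, auto)
  have h2i: "integrable Q (\<lambda>x. h x * h x)" by (rule bounded_integrable[OF Q _ hbb]) (use hm in auto)
  have gi: "integrable Q g" "integrable Q (\<lambda>x. g x * g x)"
    unfolding g_def using hi h2i by (auto simp: algebra_simps)
  let ?a = "integral\<^sup>L Q (\<lambda>x. g x * g x)" and ?b = "(integral\<^sup>L Q g)\<^sup>2"
  note S = integral_PiM_double_sum[OF Q I(1) gi]
  have eqz: "((\<Sum>i\<in>I. h (z i)) / ?K - t)\<^sup>2 = (\<Sum>i\<in>I. \<Sum>l\<in>I. g (z i) * g (z l)) / ?K\<^sup>2" for z
  proof -
    have "(\<Sum>i\<in>I. h (z i)) / ?K - t = (\<Sum>i\<in>I. g (z i)) / ?K"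
      using K by (simp add: g_def sum_subtractf field_simps)
    then show ?thesis by (simp add: power_divide power2_eq_square sum_product)
  qed
  show "integrable ?P (\<lambda>z. ((\<Sum>i\<in>I. h (z i)) / real (card I) - t)\<^sup>2)"
    unfolding eqz using S(1) by (intro integrable_divide) auto
  have variance: "?a - ?b \<le> B\<^sup>2"
  proof -
    have "?a - ?b = integral\<^sup>L Q (\<lambda>x. h x * h x) - (integral\<^sup>L Q h)\<^sup>2"
      unfolding g_def using hi h2i
      by (simp add: algebra_simps power2_eq_square Q.prob_space)
    also have "integral\<^sup>L Q (\<lambda>x. h x * h x) \<le> integral\<^sup>L Q (\<lambda>x. B * B)"
      using hbb h2i by (intro integral_mono_AE) (auto elim: AE_mp intro!: AE_I2 dest: abs_le_D1)
    finally have "?a - ?b \<le> B\<^sup>2 - (integral\<^sup>L Q h)\<^sup>2"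
      by (simp add: Q.prob_space power2_eq_square)
    then show ?thesis using zero_le_power2[of "integral\<^sup>L Q h"] by linarith
  qed
  have "integral\<^sup>L ?P (\<lambda>z. ((\<Sum>i\<in>I. h (z i)) / real (card I) - t)\<^sup>2) = ?K * (?a + (?K - 1) * ?b) / ?K\<^sup>2"
    unfolding eqz S(2)[symmetric] by simp
  also have "\<dots> = (?a - ?b) / ?K + ?b" using K by (simp add: field_simps power2_eq_square)
  also have "\<dots> \<le> B\<^sup>2 / ?K + ?b" using variance K by (simp add: divide_right_mono)
  also have "?b = (integral\<^sup>L Q h - t)\<^sup>2" unfolding g_def using hi by (simp add: Q.prob_space)
  finally show "integral\<^sup>L ?P (\<lambda>z. ((\<Sum>i\<in>I. h (z i)) / real (card I) - t)\<^sup>2)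
       \<le> B\<^sup>2 / real (card I) + (integral\<^sup>L Q h - t)\<^sup>2" .
qed

section \<open>The positive-part correction\<close>

text \<open>The normalised positive part of a function, which replaces \<open>qhat\<close> when the
  latter takes negative values.\<close>
definition posnorm :: "(real \<Rightarrow> real) \<Rightarrow> real \<Rightarrow> real" where
  "posnorm q y = max (q y) 0 / integral\<^sup>L U01 (\<lambda>s. max (q s) 0)"

lemma divide_le_self:
  fixes a b :: real assumes "0 \<le> a" "1 \<le> b" shows "a / b \<le> a"
  using assms by (simp add: divide_le_eq mult_le_cancel_left1)

text \<open>If \<open>\<integral>q = 1\<close>, the normaliser \<open>I = \<integral>q\<^sup>+\<close> is at least one and exceeds one by at most
  \<open>\<integral>q\<^sup>- \<le> \<integral>|q - p|\<close> for any nonnegative \<open>p\<close>.\<close>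
lemma posnorm_normaliser:
  fixes q p :: "real \<Rightarrow> real"
  assumes qm: "q \<in> borel_measurable U01" and qL2: "integrable U01 (\<lambda>x. (q x)\<^sup>2)"
    and q1: "integral\<^sup>L U01 q = 1"
    and pm: "p \<in> borel_measurable U01" and pL2: "integrable U01 (\<lambda>x. (p x)\<^sup>2)"
    and p0: "\<And>x. x \<in> {0..1} \<Longrightarrow> 0 \<le> p x"
  defines "I \<equiv> integral\<^sup>L U01 (\<lambda>x. max (q x) 0)"
  shows "1 \<le> I" "(I - 1)\<^sup>2 \<le> integral\<^sup>L U01 (\<lambda>x. (q x - p x)\<^sup>2)"
proof -
  have qi: "integrable U01 q" by (rule L2_L1[OF qm qL2])
  have qmi: "integrable U01 (\<lambda>x. max (- q x) 0)" using qi by auto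
  have "max (q x) 0 = q x + max (- q x) 0" for x by auto
  then have Ieq: "I = 1 + integral\<^sup>L U01 (\<lambda>x. max (- q x) 0)"
    unfolding I_def using qi qmi q1 by simp
  have neg_part_nonneg: "0 \<le> integral\<^sup>L U01 (\<lambda>x. max (- q x) 0)" by (intro integral_nonneg_AE) auto
  then show "1 \<le> I" using Ieq by simp
  have dm: "(\<lambda>x. \<bar>q x - p x\<bar>) \<in> borel_measurable U01" using qm pm by auto
  have dL2: "integrable U01 (\<lambda>x. (\<bar>q x - p x\<bar>)\<^sup>2)" using L2_diff[OF qm qL2 pm pL2] by simp
  have neg_part_le: "integral\<^sup>L U01 (\<lambda>x. max (- q x) 0) \<le> integral\<^sup>L U01 (\<lambda>x. \<bar>q x - p x\<bar>)"
  proof (rule integral_mono_AE)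
    show "integrable U01 (\<lambda>x. \<bar>q x - p x\<bar>)" using L2_L1[OF dm dL2] .
    show "AE x in U01. max (- q x) 0 \<le> \<bar>q x - p x\<bar>" using p0 by (intro AE_I2) fastforce
  qed (use qmi in auto)
  have "(I - 1)\<^sup>2 \<le> (integral\<^sup>L U01 (\<lambda>x. \<bar>q x - p x\<bar>))\<^sup>2"
    unfolding Ieq using neg_part_nonneg neg_part_le by (intro power_mono) auto
  also have "\<dots> \<le> integral\<^sup>L U01 (\<lambda>x. (q x - p x)\<^sup>2)"
    using square_of_integral_le[OF dm dL2] by simp
  finally show "(I - 1)\<^sup>2 \<le> integral\<^sup>L U01 (\<lambda>x. (q x - p x)\<^sup>2)" .
qed

lemma posnorm_L2:
  fixes q :: "real \<Rightarrow> real"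
  assumes qm: "q \<in> borel_measurable U01" and qL2: "integrable U01 (\<lambda>x. (q x)\<^sup>2)"
    and I: "1 \<le> integral\<^sup>L U01 (\<lambda>x. max (q x) 0)"
  shows "integrable U01 (\<lambda>x. (posnorm q x)\<^sup>2)"
proof (rule Bochner_Integration.integrable_bound[OF qL2])
  show "AE x in U01. norm ((posnorm q x)\<^sup>2) \<le> norm ((q x)\<^sup>2)"
  proof (rule AE_I2)
    fix x
    have "(posnorm q x)\<^sup>2 \<le> (max (q x) 0)\<^sup>2" using I unfolding posnorm_def
      by (simp add: power_divide) (intro divide_le_self, auto simp: one_le_power)
    also have "\<dots> \<le> (q x)\<^sup>2" by (cases "q x \<ge> 0") auto
    finally show "norm ((posnorm q x)\<^sup>2) \<le> norm ((q x)\<^sup>2)" by simp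
  qed
qed (use qm in \<open>auto simp: posnorm_def\<close>)

lemma posnorm_integral:
  assumes "integral\<^sup>L U01 (\<lambda>x. max (q x) 0) \<noteq> 0"
  shows "integral\<^sup>L U01 (posnorm q) = 1"
  unfolding posnorm_def[abs_def] using assms by simp

lemma posnorm_pointwise:
  fixes q p I :: real
  assumes p: "0 \<le> p" and I: "1 \<le> I"
  shows "(max q 0 / I - p)\<^sup>2 \<le> 2 * (q - p)\<^sup>2 + 2 * ((I - 1)\<^sup>2 * p\<^sup>2)"
proof -
  let ?a = "(max q 0 - p) / I" and ?b = "p * (1 / I - 1)"
  have eq: "max q 0 / I - p = ?a + ?b" using I by (simp add: field_simps)
  have s: "(?a + ?b)\<^sup>2 \<le> 2 * ?a\<^sup>2 + 2 * ?b\<^sup>2"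
    using sum_squares_bound[of ?a ?b] by (simp add: power2_sum)
  have qp: "(max q 0 - p)\<^sup>2 \<le> (q - p)\<^sup>2"
  proof (cases "q \<ge> 0")
    case False
    then have "p\<^sup>2 \<le> (p - q)\<^sup>2" using p by (intro power_mono) auto
    then show ?thesis using False by (simp add: power2_commute)
  qed simp
  have a: "?a\<^sup>2 \<le> (q - p)\<^sup>2"
  proof -
    have "?a\<^sup>2 = (max q 0 - p)\<^sup>2 / I\<^sup>2" by (simp add: power_divide)
    also have "\<dots> \<le> (max q 0 - p)\<^sup>2" using I by (intro divide_le_self) (auto simp: one_le_power)
    finally show ?thesis using qp by linarith
  qed
  have b: "?b\<^sup>2 \<le> (I - 1)\<^sup>2 * p\<^sup>2"
  proof -
    have "1 - 1 / I = (I - 1) / I" using I by (simp add: field_simps)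
    also have "\<dots> \<le> I - 1" using I by (intro divide_le_self) auto
    finally have "(1 - 1 / I)\<^sup>2 \<le> (I - 1)\<^sup>2" using I by (intro power_mono) auto
    then have "p\<^sup>2 * (1 - 1 / I)\<^sup>2 \<le> p\<^sup>2 * (I - 1)\<^sup>2" by (intro mult_left_mono) auto
    then show ?thesis by (simp add: power_mult_distrib power2_commute[of 1] mult.commute)
  qed
  show ?thesis unfolding eq using s a b by linarith
qed

text \<open>The factor by which the correction may inflate the squared \<open>L\<^sub>2\<close> distance to a
  density in the Sobolev ball of radius \<open>C\<close>.\<close>
definition corr_factor :: "real \<Rightarrow> real" where "corr_factor C = 2 * (2 + C\<^sup>2)"

lemma corr_factor_nonneg: "0 \<le> corr_factor C"
  unfolding corr_factor_def by simp

context sobolev_density begin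

lemma posnorm_error:
  fixes q :: "real \<Rightarrow> real"
  assumes qm: "q \<in> borel_measurable U01" and qL2: "integrable U01 (\<lambda>x. (q x)\<^sup>2)"
    and q1: "integral\<^sup>L U01 q = 1"
  shows "integral\<^sup>L U01 (\<lambda>x. (posnorm q x - p x)\<^sup>2) \<le> corr_factor C * integral\<^sup>L U01 (\<lambda>x. (q x - p x)\<^sup>2)"
proof -
  let ?I = "integral\<^sup>L U01 (\<lambda>x. max (q x) 0)" and ?D = "integral\<^sup>L U01 (\<lambda>x. (q x - p x)\<^sup>2)"
  note I = posnorm_normaliser[OF qm qL2 q1 p_meas_U01 p_L2 p_nonneg]
  have dL2: "integrable U01 (\<lambda>x. (q x - p x)\<^sup>2)" by (rule L2_diff[OF qm qL2 p_meas_U01 p_L2])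
  have fi: "integrable U01 (\<lambda>x. (posnorm q x - p x)\<^sup>2)"
    using L2_diff[OF _ posnorm_L2[OF qm qL2 I(1)] p_meas_U01 p_L2] qm
    by (auto simp: posnorm_def)
  have "integral\<^sup>L U01 (\<lambda>x. (posnorm q x - p x)\<^sup>2)
     \<le> integral\<^sup>L U01 (\<lambda>x. 2 * (q x - p x)\<^sup>2 + 2 * ((?I - 1)\<^sup>2 * (p x)\<^sup>2))"
    using dL2 p_L2 p_nonneg I(1) unfolding posnorm_def
    by (intro integral_mono_AE[OF fi[unfolded posnorm_def]]) (auto intro!: AE_I2 posnorm_pointwise)
  also have "\<dots> = 2 * ?D + 2 * ((?I - 1)\<^sup>2 * integral\<^sup>L U01 (\<lambda>x. (p x)\<^sup>2))"
    using dL2 p_L2 by simp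
  also have "\<dots> \<le> 2 * ?D + 2 * (?D * (1 + C\<^sup>2))"
    using I(2) density_L2_norm by (intro add_left_mono mult_left_mono mult_mono) auto
  also have "\<dots> = corr_factor C * ?D" by (simp add: corr_factor_def algebra_simps)
  finally show ?thesis .
qed

end

section \<open>The sampling distributions\<close>

lemma sets_dens01 [simp, measurable_cong]: "sets (dens01 f) = sets borel"
  by (simp add: dens01_def)

lemma space_dens01 [simp]: "space (dens01 f) = UNIV"
  by (simp add: dens01_def)

lemma measurable_dens01_iff: "g \<in> borel_measurable (dens01 f) \<longleftrightarrow> g \<in> borel_measurable borel"
  by (subst measurable_cong_sets[OF sets_dens01[of f] refl]) (rule refl)

lemma dens01_facts:
  fixes f :: "real \<Rightarrow> real"
  assumes fm: "f \<in> borel_measurable borel" and f0: "\<And>x. x \<in> {0..1} \<Longrightarrow> 0 \<le> f x"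
    and fi: "integrable U01 f" and f1: "integral\<^sup>L U01 f = 1"
  shows "prob_space (dens01 f)"
    "AE x in dens01 f. x \<in> {0..1}"
    "\<And>h. h \<in> borel_measurable borel \<Longrightarrow> integral\<^sup>L (dens01 f) h = integral\<^sup>L U01 (\<lambda>x. f x * h x)"
proof -
  let ?g = "\<lambda>x. indicator {0..1} x * f x :: real"
  have gm: "?g \<in> borel_measurable borel" using fm by measurable
  have g0: "\<And>x. 0 \<le> ?g x" using f0 by (auto simp: indicator_def)
  have gi: "integrable lborel ?g"
    using fi unfolding set_integrable_U01[symmetric] set_integrable_def by simp
  have "emeasure (dens01 f) (space (dens01 f)) = \<integral>\<^sup>+ x. ennreal (?g x) \<partial>lborel"
    unfolding dens01_def by (subst emeasure_density) (use gm in auto)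
  also have "\<dots> = ennreal (integral\<^sup>L lborel ?g)"
    using gi g0 by (intro nn_integral_eq_integral) auto
  also have "integral\<^sup>L lborel ?g = 1"
    using f1 unfolding set_integral_U01[symmetric] set_lebesgue_integral_def by simp
  finally show "prob_space (dens01 f)" by (intro prob_spaceI) simp
  show "AE x in dens01 f. x \<in> {0..1}"
    unfolding dens01_def using gm by (subst AE_density) (auto simp: indicator_def)
  fix h :: "real \<Rightarrow> real" assume hm: "h \<in> borel_measurable borel"
  have "integral\<^sup>L (dens01 f) h = integral\<^sup>L lborel (\<lambda>x. ?g x *\<^sub>R h x)"
    unfolding dens01_def using hm gm g0 by (intro integral_density) auto
  also have "\<dots> = (\<integral>x\<in>{0..1}. f x * h x \<partial>lborel)"
    unfolding set_lebesgue_integral_def by (simp add: mult.assoc)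
  also have "\<dots> = integral\<^sup>L U01 (\<lambda>x. f x * h x)" by (rule set_integral_U01)
  finally show "integral\<^sup>L (dens01 f) h = integral\<^sup>L U01 (\<lambda>x. f x * h x)" .
qed

text \<open>If \<open>\<integral>q = 1\<close>, the correction \<open>qcorr\<close> of the definitions and \<open>posnorm\<close> define the
  same law: when \<open>q \<ge> 0\<close> on \<open>[0,1]\<close> the positive part is \<open>q\<close> itself, with normaliser one.\<close>
lemma dens01_qcorr:
  fixes q :: "real \<Rightarrow> real"
  assumes q1: "integral\<^sup>L U01 q = 1"
  shows "dens01 (qcorr q) = dens01 (posnorm q)"
proof -
  have pos: "q s * indicator {s. q s > 0} s = max (q s) 0" for s by (auto simp: indicator_def)
  have eq: "indicator {0..1} y * qcorr q y = indicator {0..1} y * posnorm q y" for y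
  proof (cases "\<exists>y\<in>{0..1}. q y < 0")
    case True
    then show ?thesis unfolding qcorr_def posnorm_def set_integral_U01 pos by simp
  next
    case False
    have "integral\<^sup>L U01 (\<lambda>y. max (q y) 0) = integral\<^sup>L U01 q"
      using False by (intro Bochner_Integration.integral_cong) (auto simp: not_less)
    then show ?thesis using False q1 unfolding qcorr_def posnorm_def
      by (auto simp: indicator_def not_less)
  qed
  show ?thesis unfolding dens01_def eq by (rule refl)
qed

lemma space_laplace [simp]: "space (laplace_dist a c n m) = UNIV"
  by (simp add: laplace_dist_def)

lemma sets_laplace [simp, measurable_cong]: "sets (laplace_dist a c n m) = sets borel"
  by (simp add: laplace_dist_def)

lemma nn_integral_reflect:
  fixes F :: "real \<Rightarrow> ennreal"
  assumes "F \<in> borel_measurable borel"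
  shows "(\<integral>\<^sup>+ x. F (- x) \<partial>lborel) = (\<integral>\<^sup>+ x. F x \<partial>lborel)"
proof -
  have "(\<integral>\<^sup>+ x. F x \<partial>lborel) = (\<integral>\<^sup>+ x. F x \<partial>distr lborel borel uminus)"
    by (simp add: lborel_distr_uminus)
  also have "\<dots> = (\<integral>\<^sup>+ x. F (- x) \<partial>lborel)"
    using assms by (subst nn_integral_distr) auto
  finally show ?thesis by simp
qed

text \<open>The Laplace density \<open>\<lambda>/2 e\<^sup>-\<^sup>\<lambda>\<^sup>|\<^sup>v\<^sup>|\<close> is the symmetrisation of the exponential
  density, so even moments of the two agree.\<close>
lemma laplace_even_moment:
  fixes h :: "real \<Rightarrow> real" and l :: real
  assumes l: "0 < l" and hm: "h \<in> borel_measurable borel" and h0: "\<And>x. 0 \<le> h x"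
    and he: "\<And>x. h (- x) = h x"
  shows "(\<integral>\<^sup>+ v. ennreal (l / 2 * exp (- (l * \<bar>v\<bar>)) * h v) \<partial>lborel)
       = (\<integral>\<^sup>+ v. ennreal (erlang_density 0 l v * h v) \<partial>lborel)"
proof -
  let ?e = "erlang_density 0 l"
  let ?E = "\<lambda>v. ennreal (?e v * h v)"
  have half: "ennreal (1/2) + ennreal (1/2) = 1"
    by (subst ennreal_plus[symmetric]) auto
  have ae: "AE v in lborel. ennreal (l / 2 * exp (- (l * \<bar>v\<bar>)) * h v)
      = ennreal (1/2) * ?E v + ennreal (1/2) * ?E (- v)"
    using AE_lborel_singleton[of 0]
  proof eventually_elim
    case (elim v)
    have e0: "0 \<le> ?e v * h v" "0 \<le> ?e (- v) * h (- v)" using l h0 by auto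
    have "l / 2 * exp (- (l * \<bar>v\<bar>)) * h v = 1/2 * (?e v * h v) + 1/2 * (?e (- v) * h (- v))"
      using elim l he[of v] by (cases "v < 0") (auto simp: erlang_density_def)
    then have "ennreal (l / 2 * exp (- (l * \<bar>v\<bar>)) * h v)
        = ennreal (1/2 * (?e v * h v)) + ennreal (1/2 * (?e (- v) * h (- v)))"
      using e0 by (simp only:) (rule ennreal_plus, auto)
    then show ?case using e0 by (subst (asm) (1 2) ennreal_mult) auto
  qed
  have "(\<integral>\<^sup>+ v. ennreal (l / 2 * exp (- (l * \<bar>v\<bar>)) * h v) \<partial>lborel)
     = ennreal (1/2) * (\<integral>\<^sup>+ v. ?E v \<partial>lborel) + ennreal (1/2) * (\<integral>\<^sup>+ v. ?E (- v) \<partial>lborel)"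
    unfolding nn_integral_cong_AE[OF ae] using hm by (simp add: nn_integral_add nn_integral_cmult)
  also have "(\<integral>\<^sup>+ v. ?E (- v) \<partial>lborel) = (\<integral>\<^sup>+ v. ?E v \<partial>lborel)"
    using nn_integral_reflect[of ?E] hm by simp
  finally show ?thesis unfolding distrib_right[symmetric] half by simp
qed

lemma laplace_facts:
  fixes l :: real
  assumes l: "0 < l"
  defines "L \<equiv> density lborel (\<lambda>v. ennreal (l / 2 * exp (- (l * \<bar>v\<bar>))))"
  shows "prob_space L" "integrable L (\<lambda>v. v\<^sup>2)" "integral\<^sup>L L (\<lambda>v. v\<^sup>2) = 2 / l\<^sup>2"
proof -
  have dm: "(\<lambda>v. ennreal (l / 2 * exp (- (l * \<bar>v\<bar>)))) \<in> borel_measurable borel" by measurable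
  have "emeasure L (space L) = (\<integral>\<^sup>+ v. ennreal (l / 2 * exp (- (l * \<bar>v\<bar>)) * 1) \<partial>lborel)"
    unfolding L_def by (subst emeasure_density) (use dm in auto)
  also have "\<dots> = (\<integral>\<^sup>+ v. ennreal (erlang_density 0 l v * 1) \<partial>lborel)"
    by (rule laplace_even_moment[OF l]) auto
  also have "\<dots> = 1"
    using nn_integral_erlang_ith_moment[OF l, of 0 0] by simp
  finally show "prob_space L" by (intro prob_spaceI)
  have "(\<integral>\<^sup>+ v. ennreal (v\<^sup>2) \<partial>L) = (\<integral>\<^sup>+ v. ennreal (l / 2 * exp (- (l * \<bar>v\<bar>)) * v\<^sup>2) \<partial>lborel)"
    unfolding L_def using dm l by (simp add: nn_integral_density ennreal_mult[symmetric])
  also have "\<dots> = (\<integral>\<^sup>+ v. ennreal (erlang_density 0 l v * v ^ 2) \<partial>lborel)"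
    by (rule laplace_even_moment[OF l]) auto
  also have "\<dots> = ennreal (2 / l\<^sup>2)"
    using nn_integral_erlang_ith_moment[OF l, of 0 2] by simp
  finally have nn: "(\<integral>\<^sup>+ v. ennreal (v\<^sup>2) \<partial>L) = ennreal (2 / l\<^sup>2)" .
  have "sets L = sets borel" unfolding L_def by simp
  then have meas: "(\<lambda>v. v\<^sup>2) \<in> borel_measurable L" by (subst measurable_cong_sets) auto
  then show "integrable L (\<lambda>v. v\<^sup>2)" by (rule integrableI_nonneg) (auto simp: nn)
  show "integral\<^sup>L L (\<lambda>v. v\<^sup>2) = 2 / l\<^sup>2"
    using meas by (subst integral_eq_nn_integral) (auto simp: nn)
qed

context sobolev_density begin

text \<open>If \<open>Z\<^sub>1, \<dots>, Z\<^sub>k\<close> are i.i.d. with density \<open>f\<close> on \<open>[0,1]\<close>, the empirical coefficients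
  estimate those of \<open>p\<close> with mean-square error at most the variance term \<open>m c0\<^sup>2/k\<close>
  plus the squared coefficient distance between \<open>f\<close> and \<open>p\<close>, which Bessel's inequality
  bounds by \<open>\<parallel>f - p\<parallel>\<^sup>2\<close>.\<close>
lemma sample_coefficient_risk:
  fixes f :: "real \<Rightarrow> real" and k m :: nat
  assumes fm: "f \<in> borel_measurable borel" and f0: "\<And>x. x \<in> {0..1} \<Longrightarrow> 0 \<le> f x"
    and fL2: "integrable U01 (\<lambda>x. (f x)\<^sup>2)" and f1: "integral\<^sup>L U01 f = 1" and k: "k \<ge> 1"
  shows "integrable (PiM {1..k} (\<lambda>_. dens01 f))
           (\<lambda>Z. \<Sum>j=1..m. ((\<Sum>i\<in>{1..k}. \<psi> j (Z i)) / real k - \<beta> j)\<^sup>2)"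
    "integral\<^sup>L (PiM {1..k} (\<lambda>_. dens01 f)) (\<lambda>Z. \<Sum>j=1..m. ((\<Sum>i\<in>{1..k}. \<psi> j (Z i)) / real k - \<beta> j)\<^sup>2)
         \<le> real m * c0\<^sup>2 / real k + integral\<^sup>L U01 (\<lambda>x. (f x - p x)\<^sup>2)"
proof -
  have fU: "f \<in> borel_measurable U01" using measurable_U01[OF fm] .
  note D = dens01_facts[OF fm f0 L2_L1[OF fU fL2] f1]
  let ?Q = "dens01 f" and ?P = "PiM {1..k} (\<lambda>_. dens01 f)"
  let ?a = "\<lambda>j Z. ((\<Sum>i\<in>{1..k}. \<psi> j (Z i)) / real k - \<beta> j)\<^sup>2"
  have bounded: "AE x in ?Q. \<bar>\<psi> j x\<bar> \<le> c0" if "j \<ge> 1" for j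
  proof (rule AE_mp[OF D(2)])
    show "AE x in ?Q. x \<in> {0..1} \<longrightarrow> \<bar>\<psi> j x\<bar> \<le> c0"
      by (intro AE_I2 impI psi_bnd[OF that])
  qed
  have mse: "integrable ?P (?a j) \<and> integral\<^sup>L ?P (?a j) \<le> c0\<^sup>2 / real k + (integral\<^sup>L ?Q (\<psi> j) - \<beta> j)\<^sup>2"
    if "j \<in> {1..m}" for j
    using empirical_mean_mse[OF D(1) _ bounded, of j "{1..k}" "\<beta> j"] that k psi_meas
    by (simp add: measurable_dens01_iff)
  show "integrable ?P (\<lambda>Z. \<Sum>j=1..m. ?a j Z)" using mse by auto
  have coeff_diff: "integral\<^sup>L ?Q (\<psi> j) - \<beta> j = integral\<^sup>L U01 (\<lambda>x. (f x - p x) * \<psi> j x)"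
    if "j \<in> {1..m}" for j
  proof -
    have "integral\<^sup>L U01 (\<lambda>x. (f x - p x) * \<psi> j x)
        = integral\<^sup>L U01 (\<lambda>x. f x * \<psi> j x) - integral\<^sup>L U01 (\<lambda>x. p x * \<psi> j x)"
      using psi_mult_integrable[OF fU fL2] p_psi_integrable that by (simp add: left_diff_distrib)
    then show ?thesis using D(3) psi_meas coefficient_eq that by simp
  qed
  have "integral\<^sup>L ?P (\<lambda>Z. \<Sum>j=1..m. ?a j Z) = (\<Sum>j=1..m. integral\<^sup>L ?P (?a j))"
    using mse by (intro Bochner_Integration.integral_sum) auto
  also have "\<dots> \<le> (\<Sum>j=1..m. c0\<^sup>2 / real k + (integral\<^sup>L U01 (\<lambda>x. (f x - p x) * \<psi> j x))\<^sup>2)"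
    using mse coeff_diff by (intro sum_mono) auto
  also have "\<dots> = real m * c0\<^sup>2 / real k + (\<Sum>j=1..m. (integral\<^sup>L U01 (\<lambda>x. (f x - p x) * \<psi> j x))\<^sup>2)"
    by (simp add: sum.distrib)
  also have "\<dots> \<le> real m * c0\<^sup>2 / real k + integral\<^sup>L U01 (\<lambda>x. (f x - p x)\<^sup>2)"
    using bessel_inequality[of "\<lambda>x. f x - p x" "{1..m}"] L2_diff[OF fU fL2 p_meas_U01 p_L2]
      fU p_meas_U01 by auto
  finally show "integral\<^sup>L ?P (\<lambda>Z. \<Sum>j=1..m. ?a j Z) \<le> real m * c0\<^sup>2 / real k + integral\<^sup>L U01 (\<lambda>x. (f x - p x)\<^sup>2)" .
qed

end

section \<open>Measurability of the synthetic-data kernel\<close>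

text \<open>Measurability of \<open>\<theta> \<mapsto> P\<^sub>\<theta>(B)\<close> for single
  factors comes from the measurability of parametric integrals.\<close>
lemma dens01_emeasure_measurable:
  fixes f :: "'a \<Rightarrow> real \<Rightarrow> real"
  assumes F: "(\<lambda>w. f (fst w) (snd w)) \<in> borel_measurable (A \<Otimes>\<^sub>M borel)"
    and F1: "\<And>\<theta>. f \<theta> \<in> borel_measurable borel" and B: "B \<in> sets borel"
  shows "(\<lambda>\<theta>. emeasure (dens01 (f \<theta>)) B) \<in> borel_measurable A"
proof -
  let ?g = "\<lambda>\<theta> y. ennreal (indicator {0..1} y * f \<theta> y) * indicator B y"
  have e: "emeasure (dens01 (f \<theta>)) B = (\<integral>\<^sup>+ y. ?g \<theta> y \<partial>lborel)" for \<theta>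
    unfolding dens01_def using B F1[of \<theta>] by (subst emeasure_density) auto
  have "(\<lambda>w. ?g (fst w) (snd w)) \<in> borel_measurable (A \<Otimes>\<^sub>M borel)"
    using F B by measurable
  then have "(\<lambda>w. ?g (fst w) (snd w)) \<in> borel_measurable (A \<Otimes>\<^sub>M lborel)"
    by (subst measurable_cong_sets[OF sets_pair_measure_cong[OF refl sets_lborel] refl])
  then show ?thesis
    unfolding e using lborel.borel_measurable_nn_integral[of ?g A] by (simp add: split_beta')
qed

lemma PiM_dens01_kernel_measurable:
  fixes f :: "'a \<Rightarrow> real \<Rightarrow> real" and k :: nat
  assumes F: "(\<lambda>w. f (fst w) (snd w)) \<in> borel_measurable (A \<Otimes>\<^sub>M borel)"
    and F1: "\<And>\<theta>. f \<theta> \<in> borel_measurable borel"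
    and P: "\<And>\<theta>. prob_space (dens01 (f \<theta>))"
  shows "(\<lambda>\<theta>. PiM {1..k} (\<lambda>_. dens01 (f \<theta>)))
     \<in> measurable A (subprob_algebra (PiM {1..k} (\<lambda>_. borel :: real measure)))"
proof (rule measurable_subprob_algebra_generated[where \<Omega>="space (PiM {1..k} (\<lambda>_. borel :: real measure))"
      and G="prod_algebra {1..k} (\<lambda>_. borel :: real measure)"])
  show "sets (PiM {1..k} (\<lambda>_. borel :: real measure))
      = sigma_sets (space (PiM {1..k} (\<lambda>_. borel :: real measure))) (prod_algebra {1..k} (\<lambda>_. borel))"
    by (simp add: sets_PiM space_PiM)
  show "Int_stable (prod_algebra {1..k} (\<lambda>_. borel :: real measure))" by (rule Int_stable_prod_algebra)
  show "prod_algebra {1..k} (\<lambda>_. borel :: real measure) \<subseteq> Pow (space (PiM {1..k} (\<lambda>_. borel :: real measure)))"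
    unfolding space_PiM by (rule prod_algebra_sets_into_space)
  fix a
  show "subprob_space (PiM {1..k} (\<lambda>_. dens01 (f a)))"
    by (intro prob_space_imp_subprob_space prob_space_PiM P)
  show "sets (PiM {1..k} (\<lambda>_. dens01 (f a))) = sets (PiM {1..k} (\<lambda>_. borel :: real measure))"
    by (intro sets_PiM_cong) auto
next
  fix X assume "X \<in> prod_algebra {1..k} (\<lambda>_. borel :: real measure)"
  then obtain E where XE: "X = PiE {1..k} E" and E: "\<And>i. i \<in> {1..k} \<Longrightarrow> E i \<in> sets borel"
    unfolding prod_algebra_eq_finite[OF finite_atLeastAtMost] by (force simp: Pi_iff)
  have "emeasure (PiM {1..k} (\<lambda>_. dens01 (f \<theta>))) X = (\<Prod>i\<in>{1..k}. emeasure (dens01 (f \<theta>)) (E i))"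
    for \<theta>
  proof -
    interpret product_sigma_finite "\<lambda>_::nat. dens01 (f \<theta>)" by (rule product_sigma_finite_prob[OF P])
    show ?thesis unfolding XE by (rule emeasure_PiM) (use E in auto)
  qed
  then show "(\<lambda>\<theta>. emeasure (PiM {1..k} (\<lambda>_. dens01 (f \<theta>))) X) \<in> borel_measurable A"
    using dens01_emeasure_measurable[OF F F1] E by (simp add: borel_measurable_prod_ennreal)
next
  have "emeasure (PiM {1..k} (\<lambda>_. dens01 (f \<theta>))) (space (PiM {1..k} (\<lambda>_. borel :: real measure))) = 1"
    for \<theta>
  proof -
    interpret prob_space "PiM {1..k} (\<lambda>_. dens01 (f \<theta>))" by (intro prob_space_PiM P)
    have "space (PiM {1..k} (\<lambda>_. borel :: real measure)) = space (PiM {1..k} (\<lambda>_. dens01 (f \<theta>)))"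
      by (simp add: space_PiM)
    then show ?thesis using emeasure_space_1 by simp
  qed
  then show "(\<lambda>\<theta>. emeasure (PiM {1..k} (\<lambda>_. dens01 (f \<theta>)))
      (space (PiM {1..k} (\<lambda>_. borel :: real measure)))) \<in> borel_measurable A" by simp
qed

abbreviation (input) sample_space :: "nat \<Rightarrow> nat \<Rightarrow> ((nat \<Rightarrow> real) \<times> (nat \<Rightarrow> real)) measure" where
  "sample_space n m \<equiv> PiM {1..n} (\<lambda>_. borel) \<Otimes>\<^sub>M PiM {1..m} (\<lambda>_. borel)"

context bounded_onb begin

text \<open>\<open>\<psi>\<^sub>0\<close> is unconstrained, so joint measurability in \<open>(X, \<nu>, y)\<close> is proved for the
  measurable family \<open>\<psi>'\<close>, which agrees with \<open>\<psi>\<close> on the indices \<open>j \<ge> 1\<close> used by \<open>qhat\<close>.\<close>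
definition psi' :: "nat \<Rightarrow> real \<Rightarrow> real" where
  "psi' j = (if j = 0 then (\<lambda>_. 0) else \<psi> j)"

lemma psi'_meas [measurable]: "psi' j \<in> borel_measurable borel"
  unfolding psi'_def using psi_meas by auto

lemma qhat_psi': "qhat \<psi> m n X \<nu> = qhat psi' m n X \<nu>"
  unfolding qhat_def psi'_def by (intro ext arg_cong2[where f="(+)"] refl sum.cong) auto

lemma qhat_joint_meas:
  "(\<lambda>w. qhat psi' m n (fst (fst w)) (snd (fst w)) (snd w)) \<in> borel_measurable (sample_space n m \<Otimes>\<^sub>M borel)"
  unfolding qhat_def by measurable

lemma posnorm_normaliser_meas:
  "(\<lambda>\<theta>. integral\<^sup>L U01 (\<lambda>y. max (qhat psi' m n (fst \<theta>) (snd \<theta>) y) 0)) \<in> borel_measurable (sample_space n m)"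
proof -
  have "(\<lambda>x. x) \<in> measurable U01 (borel :: real measure)"
    using measurable_U01[of "\<lambda>x. x"] by simp
  then have "(\<lambda>w. (fst w, snd w)) \<in> measurable (sample_space n m \<Otimes>\<^sub>M U01) (sample_space n m \<Otimes>\<^sub>M borel)"
    by (intro measurable_Pair measurable_fst measurable_compose[OF measurable_snd])
  then have "(\<lambda>w. w) \<in> measurable (sample_space n m \<Otimes>\<^sub>M U01) (sample_space n m \<Otimes>\<^sub>M borel)"
    by simp
  from measurable_compose[OF this qhat_joint_meas]
  have "(\<lambda>w. max (qhat psi' m n (fst (fst w)) (snd (fst w)) (snd w)) 0) \<in> borel_measurable (sample_space n m \<Otimes>\<^sub>M U01)"
    by measurable
  then show ?thesis by (intro U01.borel_measurable_lebesgue_integral) (simp add: split_beta')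
qed

lemma posnorm_qhat_joint_meas:
  "(\<lambda>w. posnorm (qhat \<psi> m n (fst (fst w)) (snd (fst w))) (snd w))
     \<in> borel_measurable (sample_space n m \<Otimes>\<^sub>M borel)"
proof -
  have "(\<lambda>w. integral\<^sup>L U01 (\<lambda>y. max (qhat psi' m n (fst (fst w)) (snd (fst w)) y) 0))
     \<in> borel_measurable (sample_space n m \<Otimes>\<^sub>M borel)"
    using measurable_compose[OF measurable_fst posnorm_normaliser_meas] by simp
  then show ?thesis unfolding posnorm_def qhat_psi'
    by (intro borel_measurable_divide borel_measurable_max qhat_joint_meas borel_measurable_const)
qed

lemma posnorm_qhat_meas: "posnorm (qhat \<psi> m n X \<nu>) \<in> borel_measurable borel"
proof -
  have "qhat \<psi> m n X \<nu> \<in> borel_measurable borel" by (subst qhat_psi') (unfold qhat_def, measurable)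
  then show ?thesis unfolding posnorm_def by measurable
qed

end

text \<open>With \<open>m = \<lfloor>n\<^sup>1\<^sup>/\<^sup>(\<^sup>2\<^sup>\<gamma>\<^sup>+\<^sup>1\<^sup>)\<rfloor>\<close> the bias term \<open>m\<^sup>-\<^sup>2\<^sup>\<gamma>\<close>, the variance term \<open>m/n\<close> and
  the privacy-noise term \<open>m\<^sup>3/n\<^sup>2\<close> are all \<open>O(n\<^sup>-\<^sup>2\<^sup>\<gamma>\<^sup>/\<^sup>(\<^sup>2\<^sup>\<gamma>\<^sup>+\<^sup>1\<^sup>))\<close>; the last one
  needs \<open>\<gamma> > 1/2\<close>.\<close>
lemma bandwidth_rates:
  fixes \<gamma> :: real and n :: nat
  assumes g: "\<gamma> > 1/2" and n: "n \<ge> 1"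
  defines "m \<equiv> m_of \<gamma> n" and "r \<equiv> real n powr (- (2 * \<gamma>) / (2 * \<gamma> + 1))"
  shows "1 \<le> m" "1 / real m powr (2 * \<gamma>) \<le> 4 powr \<gamma> * r" "real m / real n \<le> r"
    "real m ^ 3 / (real n)\<^sup>2 \<le> r"
proof -
  define a where "a = real n powr (1 / (2 * \<gamma> + 1))"
  have n1: "1 \<le> real n" using n by simp
  have gp: "0 < 2 * \<gamma> + 1" using g by simp
  have a1: "1 \<le> a" unfolding a_def using n1 gp by (intro ge_one_powr_ge_zero) auto
  have mfl: "real m = of_int \<lfloor>a\<rfloor>" unfolding m_def m_of_def a_def[symmetric] using a1 by simp
  have ma: "real m \<le> a" using mfl by simp
  have m1: "1 \<le> real m" using mfl a1 by (simp add: le_floor_iff)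
  then show "1 \<le> m" by simp
  have ma2: "a / 2 \<le> real m"
  proof (cases "a < 2")
    case False
    have "a - 1 < real m" using mfl by linarith
    then show ?thesis using False by simp
  qed (use m1 in simp)
  have apow: "\<And>x. a powr x = real n powr (x / (2 * \<gamma> + 1))"
    unfolding a_def by (simp add: powr_powr)
  show "1 / real m powr (2 * \<gamma>) \<le> 4 powr \<gamma> * r"
  proof -
    have "a powr (2 * \<gamma>) / 4 powr \<gamma> = (a / 2) powr (2 * \<gamma>)"
      using a1 by (simp add: powr_divide powr_powr[symmetric])
    also have "\<dots> \<le> real m powr (2 * \<gamma>)"
      using ma2 a1 g by (intro powr_mono2) auto
    finally have le: "a powr (2 * \<gamma>) / 4 powr \<gamma> \<le> real m powr (2 * \<gamma>)" .
    have "0 < real m powr (2 * \<gamma>)" "0 < a powr (2 * \<gamma>)" using m1 a1 by auto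
    then have "1 / real m powr (2 * \<gamma>) \<le> 4 powr \<gamma> / a powr (2 * \<gamma>)"
      using le by (simp add: field_simps)
    also have "4 powr \<gamma> / a powr (2 * \<gamma>) = 4 powr \<gamma> * r"
      unfolding apow r_def by (simp add: powr_minus divide_inverse)
    finally show ?thesis .
  qed
  show "real m / real n \<le> r"
  proof -
    have "real m / real n \<le> a / real n" using ma n1 by (simp add: divide_right_mono)
    also have "a / real n = real n powr (1 / (2 * \<gamma> + 1) - 1)"
      unfolding a_def using n1 by (simp add: powr_diff)
    also have "1 / (2 * \<gamma> + 1) - 1 = - (2 * \<gamma>) / (2 * \<gamma> + 1)" using gp by (simp add: field_simps)
    finally show ?thesis unfolding r_def .
  qed
  show "real m ^ 3 / (real n)\<^sup>2 \<le> r"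
  proof -
    have "real m ^ 3 / (real n)\<^sup>2 \<le> a powr 3 / real n powr 2"
      using ma m1 n1 by (simp add: powr_realpow divide_right_mono power_mono)
    also have "a powr 3 / real n powr 2 = real n powr (3 / (2 * \<gamma> + 1) - 2)"
      unfolding apow using n1 by (simp add: powr_diff)
    also have "\<dots> \<le> real n powr (- (2 * \<gamma>) / (2 * \<gamma> + 1))"
    proof (rule powr_mono[OF _ n1])
      have "3 / (2 * \<gamma> + 1) - 2 = (1 - 4 * \<gamma>) / (2 * \<gamma> + 1)" using gp by (simp add: field_simps)
      also have "\<dots> \<le> - (2 * \<gamma>) / (2 * \<gamma> + 1)" using gp g by (intro divide_right_mono) auto
      finally show "3 / (2 * \<gamma> + 1) - 2 \<le> - (2 * \<gamma>) / (2 * \<gamma> + 1)" .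
    qed
    finally show ?thesis unfolding r_def .
  qed
qed

lemma nn_integral_affine:
  fixes g :: "'a \<Rightarrow> real"
  assumes M: "prob_space M" and g: "integrable M g" "\<And>x. x \<in> space M \<Longrightarrow> 0 \<le> g x"
    and ab: "0 \<le> a" "0 \<le> b"
  shows "(\<integral>\<^sup>+x. ennreal (a + b * g x) \<partial>M) = ennreal (a + b * integral\<^sup>L M g)"
proof -
  interpret prob_space M by fact
  have "(\<integral>\<^sup>+x. ennreal (a + b * g x) \<partial>M) = ennreal (integral\<^sup>L M (\<lambda>x. a + b * g x))"
    using g ab by (intro nn_integral_eq_integral AE_I2) auto
  also have "integral\<^sup>L M (\<lambda>x. a + b * g x) = a + b * integral\<^sup>L M g"
    using g by (simp add: prob_space)
  finally show ?thesis .
qed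

lemma markov_tail:
  fixes f :: "'a \<Rightarrow> real"
  assumes f: "f \<in> borel_measurable M" and int: "(\<integral>\<^sup>+x. ennreal (f x) \<partial>M) \<le> ennreal B"
    and B: "0 \<le> B" and t: "0 < t"
  shows "{x \<in> space M. t < f x} \<in> sets M" "measure M {x \<in> space M. t < f x} \<le> B / t"
proof -
  let ?A = "{x \<in> space M. t < f x}"
  show A: "?A \<in> sets M" using f by measurable
  have "ennreal t * emeasure M ?A = (\<integral>\<^sup>+x. ennreal t * indicator ?A x \<partial>M)"
    using nn_integral_cmult_indicator[OF A] by simp
  also have "\<dots> \<le> (\<integral>\<^sup>+x. ennreal (f x) \<partial>M)"
    by (intro nn_integral_mono) (auto simp: indicator_def intro: ennreal_leI)
  finally have le: "ennreal t * emeasure M ?A \<le> ennreal B" using int by simp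
  have inv: "ennreal (1 / t) * ennreal t = 1" using t by (simp add: ennreal_mult[symmetric])
  have "emeasure M ?A = ennreal (1 / t) * (ennreal t * emeasure M ?A)"
    by (simp add: mult.assoc[symmetric] inv)
  also have "\<dots> \<le> ennreal (1 / t) * ennreal B" by (intro mult_left_mono le) auto
  also have "\<dots> = ennreal (B / t)" using t B by (simp add: ennreal_mult[symmetric])
  finally show "measure M ?A \<le> B / t"
    unfolding measure_def using t B by (intro enn2real_leI) auto
qed

section \<open>Risk of the estimator based on privatised synthetic data\<close>

text \<open>The constant in the final rate \<open>E \<parallel>p - p\<^sub>Z\<parallel>\<^sup>2 \<le> risk_const \<cdot> n\<^sup>-\<^sup>2\<^sup>\<gamma>\<^sup>/\<^sup>(\<^sup>2\<^sup>\<gamma>\<^sup>+\<^sup>1\<^sup>)\<close>.\<close>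
definition risk_const :: "real \<Rightarrow> real \<Rightarrow> real \<Rightarrow> real \<Rightarrow> real" where
  "risk_const C \<gamma> c0 \<alpha> = (1 + corr_factor C) * C\<^sup>2 * 4 powr \<gamma> + c0\<^sup>2 + 2 * corr_factor C * c0\<^sup>2
     + 4 * corr_factor C * c0\<^sup>2 / \<alpha>\<^sup>2"

lemma risk_const_nonneg: "0 \<le> risk_const C \<gamma> c0 \<alpha>"
  unfolding risk_const_def using corr_factor_nonneg[of C] by (intro add_nonneg_nonneg) auto

text \<open>The setting of the theorem for a fixed sample size \<open>n\<close> and synthetic sample size
  \<open>k \<ge> n\<close>; the smoothness \<open>\<gamma> > 1/2\<close> suffices for the rate.\<close>
locale synthetic_estimator = sobolev_density +
  fixes n k :: nat and \<alpha> :: real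
  assumes n1: "n \<ge> 1" and kn: "k \<ge> n" and alpha: "\<alpha> > 0"
    and c0def: "c0 = c0_of \<psi>" and gam: "\<gamma> > 1/2"
begin

abbreviation "m \<equiv> m_of \<gamma> n"
abbreviation "PX \<equiv> PiM {1..n} (\<lambda>_. dens01 p)"
abbreviation "Lap \<equiv> laplace_dist \<alpha> c0 n m"
abbreviation "PV \<equiv> PiM {1..m} (\<lambda>_. Lap)"
abbreviation "KZ X \<nu> \<equiv> PiM {1..k} (\<lambda>_. dens01 (posnorm (qhat \<psi> m n X \<nu>)))"
abbreviation "PXb \<equiv> PiM {1..n} (\<lambda>_. borel :: real measure)"
abbreviation "PVb \<equiv> PiM {1..m} (\<lambda>_. borel :: real measure)"
abbreviation "PZb \<equiv> PiM {1..k} (\<lambda>_. borel :: real measure)"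
abbreviation "Nb \<equiv> PXb \<Otimes>\<^sub>M (PVb \<Otimes>\<^sub>M PZb)"

lemma m1: "m \<ge> 1" using bandwidth_rates(1)[OF gam n1] .
lemma k1: "k \<ge> 1" using n1 kn by simp

definition coef_err :: "nat \<Rightarrow> (nat \<Rightarrow> real) \<Rightarrow> real" where
  "coef_err N Z = (\<Sum>j=1..m. ((\<Sum>i\<in>{1..N}. psi' j (Z i)) / real N - \<beta> j)\<^sup>2)"

lemma coef_err_eq: "coef_err N Z = (\<Sum>j=1..m. ((\<Sum>i\<in>{1..N}. \<psi> j (Z i)) / real N - \<beta> j)\<^sup>2)"
  unfolding coef_err_def psi'_def by (intro sum.cong) auto

lemma coef_err_meas: "coef_err N \<in> borel_measurable (PiM {1..N} (\<lambda>_. borel))"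
  unfolding coef_err_def by measurable

lemma coef_err_nonneg: "0 \<le> coef_err N Z"
  unfolding coef_err_def by (simp add: sum_nonneg)

definition loss :: "(nat \<Rightarrow> real) \<Rightarrow> real" where "loss Z = bias m + coef_err k Z"

lemma L2err_eq_loss: "L2err01 p (phatZ \<psi> m k Z) = loss Z"
proof -
  have "L2err01 p (phatZ \<psi> m k Z)
      = integral\<^sup>L U01 (\<lambda>x. (p x - 1 - (\<Sum>j=1..m. ((\<Sum>i=1..k. \<psi> j (Z i)) / real k) * \<psi> j x))\<^sup>2)"
    unfolding L2err01_def phatZ_def set_integral_U01 by (simp add: diff_diff_eq)
  then show ?thesis unfolding series_loss loss_def coef_err_eq .
qed

definition lap_rate :: real where "lap_rate = real n * \<alpha> / (c0 * real m)"

lemma lap_rate_pos: "lap_rate > 0" unfolding lap_rate_def using n1 alpha c0_pos m1 by simp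

lemma Lap_facts: "prob_space Lap" "integrable Lap (\<lambda>v. v\<^sup>2)" "integral\<^sup>L Lap (\<lambda>v. v\<^sup>2) = 2 / lap_rate\<^sup>2"
proof -
  have "Lap = density lborel (\<lambda>v. ennreal (lap_rate / 2 * exp (- (lap_rate * \<bar>v\<bar>))))"
    unfolding laplace_dist_def lap_rate_def
    by (intro arg_cong2[where f=density] refl ext arg_cong[where f=ennreal]) (simp add: field_simps)
  then show "prob_space Lap" "integrable Lap (\<lambda>v. v\<^sup>2)" "integral\<^sup>L Lap (\<lambda>v. v\<^sup>2) = 2 / lap_rate\<^sup>2"
    using laplace_facts[OF lap_rate_pos] by simp_all
qed

lemma corrected_density_facts:
  fixes X \<nu> :: "nat \<Rightarrow> real"
  defines "q \<equiv> posnorm (qhat \<psi> m n X \<nu>)"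
  shows "q \<in> borel_measurable borel" "\<And>x. x \<in> {0..1} \<Longrightarrow> 0 \<le> q x"
    "integrable U01 (\<lambda>x. (q x)\<^sup>2)" "integral\<^sup>L U01 q = 1"
    "integral\<^sup>L U01 (\<lambda>x. (q x - p x)\<^sup>2)
       \<le> corr_factor C * (bias m + (\<Sum>j=1..m. ((\<Sum>i=1..n. \<psi> j (X i)) / real n + \<nu> j - \<beta> j)\<^sup>2))"
    "prob_space (dens01 q)"
proof -
  let ?d = "\<lambda>j. (\<Sum>i=1..n. \<psi> j (X i)) / real n + \<nu> j"
  have qhat_eq: "qhat \<psi> m n X \<nu> = (\<lambda>y. 1 + (\<Sum>j=1..m. ?d j * \<psi> j y))" unfolding qhat_def ..
  have Q: "qhat \<psi> m n X \<nu> \<in> borel_measurable borel" "integrable U01 (\<lambda>y. (qhat \<psi> m n X \<nu> y)\<^sup>2)"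
      "integral\<^sup>L U01 (qhat \<psi> m n X \<nu>) = 1"
    using unit_series_facts[of ?d m] unfolding qhat_eq by auto
  note QU = measurable_U01[OF Q(1)]
  note I = posnorm_normaliser[OF QU Q(2,3) p_meas_U01 p_L2 p_nonneg]
  show qm: "q \<in> borel_measurable borel" unfolding q_def by (rule posnorm_qhat_meas)
  show q0: "\<And>x. x \<in> {0..1} \<Longrightarrow> 0 \<le> q x" unfolding q_def posnorm_def using I(1) by simp
  show qL2: "integrable U01 (\<lambda>x. (q x)\<^sup>2)" unfolding q_def by (rule posnorm_L2[OF QU Q(2) I(1)])
  show q1: "integral\<^sup>L U01 q = 1" unfolding q_def using I(1) by (intro posnorm_integral) simp
  show "integral\<^sup>L U01 (\<lambda>x. (q x - p x)\<^sup>2) \<le> corr_factor C * (bias m + (\<Sum>j=1..m. (?d j - \<beta> j)\<^sup>2))"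
    using posnorm_error[OF QU Q(2,3)] unit_series_dist[where d="?d" and m=m]
    unfolding q_def qhat_eq by simp
  show "prob_space (dens01 q)"
    by (rule dens01_facts(1)[OF qm q0 L2_L1[OF measurable_U01[OF qm] qL2] q1])
qed

lemma kernel_meas: "(\<lambda>\<theta>. KZ (fst \<theta>) (snd \<theta>)) \<in> measurable (PX \<Otimes>\<^sub>M PV) (subprob_algebra PZb)"
proof -
  have "(\<lambda>\<theta>. KZ (fst \<theta>) (snd \<theta>)) \<in> measurable (PXb \<Otimes>\<^sub>M PVb) (subprob_algebra PZb)"
    using PiM_dens01_kernel_measurable[where f="\<lambda>\<theta>. posnorm (qhat \<psi> m n (fst \<theta>) (snd \<theta>))"]
      posnorm_qhat_joint_meas posnorm_qhat_meas corrected_density_facts(6) by simp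
  moreover have "sets PX = sets PXb" "sets PV = sets PVb" by (intro sets_PiM_cong; simp)+
  ultimately show ?thesis
    by (subst measurable_cong_sets[OF sets_pair_measure_cong refl]) auto
qed

lemma return_meas:
  "(\<lambda>w. return Nb (fst (fst w), snd (fst w), snd w)) \<in> measurable ((PX \<Otimes>\<^sub>M PV) \<Otimes>\<^sub>M PZb) (subprob_algebra Nb)"
proof -
  have "sets PX = sets PXb" "sets PV = sets PVb" by (intro sets_PiM_cong; simp)+
  moreover have "(\<lambda>w. (fst (fst w), snd (fst w), snd w)) \<in> measurable ((PXb \<Otimes>\<^sub>M PVb) \<Otimes>\<^sub>M PZb) Nb"
    by measurable
  ultimately have "(\<lambda>w. (fst (fst w), snd (fst w), snd w)) \<in> measurable ((PX \<Otimes>\<^sub>M PV) \<Otimes>\<^sub>M PZb) Nb"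
    by (subst measurable_cong_sets[OF sets_pair_measure_cong[OF sets_pair_measure_cong refl] refl]) auto
  from measurable_compose[OF this return_measurable] show ?thesis .
qed

lemma Z_stage_meas: "(\<lambda>\<theta>. bind (KZ (fst \<theta>) (snd \<theta>)) (\<lambda>Z. return Nb (fst \<theta>, snd \<theta>, Z)))
    \<in> measurable (PX \<Otimes>\<^sub>M PV) (subprob_algebra Nb)"
  by (rule measurable_bind[OF kernel_meas]) (use return_meas in simp)

lemma V_stage_meas: "(\<lambda>X. bind PV (\<lambda>\<nu>. bind (KZ X \<nu>) (\<lambda>Z. return Nb (X, \<nu>, Z))))
    \<in> measurable PX (subprob_algebra Nb)"
proof -
  have "PV \<in> space (subprob_algebra PV)"
    using prob_space_PiM[where M="\<lambda>_. Lap" and I="{1..m}"] Lap_facts(1)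
    by (simp add: space_subprob_algebra prob_space_imp_subprob_space)
  then show ?thesis
    by (rule measurable_bind[OF measurable_const]) (use Z_stage_meas in simp)
qed

lemma joint_law_eq: "joint_law \<psi> \<alpha> \<gamma> p n k =
   bind PX (\<lambda>X. bind PV (\<lambda>\<nu>. bind (KZ X \<nu>) (\<lambda>Z. return Nb (X, \<nu>, Z))))"
proof -
  have "dens01 (qcorr (qhat \<psi> m n X \<nu>)) = dens01 (posnorm (qhat \<psi> m n X \<nu>))" for X \<nu>
    using unit_series_facts(3) unfolding qhat_def by (intro dens01_qcorr) simp
  then show ?thesis unfolding joint_law_def c0def[symmetric] by simp
qed

lemma sets_joint_law: "sets (joint_law \<psi> \<alpha> \<gamma> p n k) = sets Nb"
  unfolding joint_law_eq
  by (rule sets_bind_measurable[OF V_stage_meas]) (simp add: space_PiM PiE_eq_empty_iff)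

end

context synthetic_estimator begin

text \<open>The parts of the risk bound that do not depend on \<open>(X, \<nu>)\<close>: truncation bias,
  the variance of the synthetic sample, and the privacy noise.\<close>
definition base_risk :: real where
  "base_risk = bias m + real m * c0\<^sup>2 / real k + corr_factor C * bias m"

definition noise_risk :: real where
  "noise_risk = 2 * corr_factor C * (real m * (2 / lap_rate\<^sup>2))"

lemma base_risk_nonneg: "0 \<le> base_risk"
  unfolding base_risk_def using bias_nonneg corr_factor_nonneg by simp

lemma noise_risk_nonneg: "0 \<le> noise_risk"
  unfolding noise_risk_def using corr_factor_nonneg by simp

lemma qhat_coef_err_split:
  "(\<Sum>j=1..m. ((\<Sum>i=1..n. \<psi> j (X i)) / real n + \<nu> j - \<beta> j)\<^sup>2)
     \<le> 2 * coef_err n X + 2 * (\<Sum>j=1..m. (\<nu> j)\<^sup>2)"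
proof -
  have "(a + v - b)\<^sup>2 \<le> 2 * (a - b)\<^sup>2 + 2 * v\<^sup>2" for a v b :: real
    using sum_squares_bound[of "a - b" v] by (simp add: power2_eq_square algebra_simps)
  then have "(\<Sum>j=1..m. ((\<Sum>i=1..n. \<psi> j (X i)) / real n + \<nu> j - \<beta> j)\<^sup>2)
      \<le> (\<Sum>j=1..m. 2 * ((\<Sum>i=1..n. \<psi> j (X i)) / real n - \<beta> j)\<^sup>2 + 2 * (\<nu> j)\<^sup>2)"
    by (intro sum_mono)
  then show ?thesis unfolding coef_err_eq by (simp add: sum.distrib sum_distrib_left)
qed

lemma risk_given_data_noise:
  "(\<integral>\<^sup>+ Z. ennreal (loss Z) \<partial>KZ X \<nu>)
     \<le> ennreal (base_risk + 2 * corr_factor C * coef_err n X + 2 * corr_factor C * (\<Sum>j=1..m. (\<nu> j)\<^sup>2))"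
proof -
  let ?q = "posnorm (qhat \<psi> m n X \<nu>)"
  note Q = corrected_density_facts[where X=X and \<nu>=\<nu>]
  note S = sample_coefficient_risk[OF Q(1-4) k1, of m, folded coef_err_eq]
  have "(\<integral>\<^sup>+ Z. ennreal (loss Z) \<partial>KZ X \<nu>) = ennreal (bias m + 1 * integral\<^sup>L (KZ X \<nu>) (coef_err k))"
    unfolding loss_def using nn_integral_affine[OF prob_space_PiM[OF Q(6)] S(1) coef_err_nonneg
        bias_nonneg, of 1] by simp
  also have "\<dots> \<le> ennreal (bias m + (real m * c0\<^sup>2 / real k + integral\<^sup>L U01 (\<lambda>x. (?q x - p x)\<^sup>2)))"
    using S(2) by (intro ennreal_leI) simp
  also have "\<dots> \<le> ennreal (base_risk + 2 * corr_factor C * coef_err n X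
      + 2 * corr_factor C * (\<Sum>j=1..m. (\<nu> j)\<^sup>2))"
  proof (intro ennreal_leI)
    have "integral\<^sup>L U01 (\<lambda>x. (?q x - p x)\<^sup>2)
        \<le> corr_factor C * (bias m + (2 * coef_err n X + 2 * (\<Sum>j=1..m. (\<nu> j)\<^sup>2)))"
      using Q(5) qhat_coef_err_split[of X \<nu>] corr_factor_nonneg
      by (meson add_left_mono mult_left_mono order_trans)
    then show "bias m + (real m * c0\<^sup>2 / real k + integral\<^sup>L U01 (\<lambda>x. (?q x - p x)\<^sup>2))
        \<le> base_risk + 2 * corr_factor C * coef_err n X + 2 * corr_factor C * (\<Sum>j=1..m. (\<nu> j)\<^sup>2)"
      unfolding base_risk_def by (simp add: algebra_simps)
  qed
  finally show ?thesis .
qed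

lemma risk_given_data:
  "(\<integral>\<^sup>+ \<nu>. ennreal (base_risk + 2 * corr_factor C * coef_err n X + 2 * corr_factor C * (\<Sum>j=1..m. (\<nu> j)\<^sup>2)) \<partial>PV)
    = ennreal ((base_risk + noise_risk) + 2 * corr_factor C * coef_err n X)"
proof -
  have PV: "prob_space PV" by (intro prob_space_PiM Lap_facts(1))
  have coord: "integrable PV (\<lambda>\<nu>. (\<nu> j)\<^sup>2) \<and> integral\<^sup>L PV (\<lambda>\<nu>. (\<nu> j)\<^sup>2) = 2 / lap_rate\<^sup>2"
    if "j \<in> {1..m}" for j
    using integral_PiM_coordinate[OF Lap_facts(1) finite_atLeastAtMost that Lap_facts(2)] Lap_facts(3)
    by auto
  have "integral\<^sup>L PV (\<lambda>\<nu>. \<Sum>j=1..m. (\<nu> j)\<^sup>2) = real m * (2 / lap_rate\<^sup>2)"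
    using coord by (subst Bochner_Integration.integral_sum) auto
  moreover have "integrable PV (\<lambda>\<nu>. \<Sum>j=1..m. (\<nu> j)\<^sup>2)" using coord by auto
  ultimately show ?thesis
    using nn_integral_affine[OF PV, of "\<lambda>\<nu>. \<Sum>j=1..m. (\<nu> j)\<^sup>2"
        "base_risk + 2 * corr_factor C * coef_err n X" "2 * corr_factor C"]
      base_risk_nonneg coef_err_nonneg corr_factor_nonneg
    unfolding noise_risk_def by (simp add: sum_nonneg algebra_simps)
qed

text \<open>Integrating out the data: the empirical coefficients of \<open>X\<close> have error \<open>\<le> m c0\<^sup>2/n\<close>.\<close>
lemma risk_unconditional:
  "(\<integral>\<^sup>+ X. ennreal ((base_risk + noise_risk) + 2 * corr_factor C * coef_err n X) \<partial>PX)
    \<le> ennreal (base_risk + noise_risk + 2 * corr_factor C * (real m * c0\<^sup>2 / real n))"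
proof -
  note P = dens01_facts(1)[OF p_meas p_nonneg p_integrable p_int1]
  note S = sample_coefficient_risk[OF p_meas p_nonneg p_L2 p_int1 n1, of m, folded coef_err_eq]
  have "(\<integral>\<^sup>+ X. ennreal ((base_risk + noise_risk) + 2 * corr_factor C * coef_err n X) \<partial>PX)
      = ennreal ((base_risk + noise_risk) + 2 * corr_factor C * integral\<^sup>L PX (coef_err n))"
    using base_risk_nonneg noise_risk_nonneg corr_factor_nonneg
    by (intro nn_integral_affine prob_space_PiM P S(1) coef_err_nonneg) auto
  also have "\<dots> \<le> ennreal (base_risk + noise_risk + 2 * corr_factor C * (real m * c0\<^sup>2 / real n))"
    using S(2) corr_factor_nonneg by (intro ennreal_leI add_left_mono mult_left_mono) auto
  finally show ?thesis .
qed

lemma loss_meas: "(\<lambda>\<omega>. ennreal (loss (snd (snd \<omega>)))) \<in> borel_measurable Nb"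
  unfolding loss_def using coef_err_meas by measurable

lemma Z_stage_integral:
  assumes X: "X \<in> space PX" and \<nu>: "\<nu> \<in> space PV"
  shows "(\<integral>\<^sup>+ \<omega>. ennreal (loss (snd (snd \<omega>))) \<partial>bind (KZ X \<nu>) (\<lambda>Z. return Nb (X, \<nu>, Z)))
    = (\<integral>\<^sup>+ Z. ennreal (loss Z) \<partial>KZ X \<nu>)"
proof -
  have Xn: "(X, \<nu>) \<in> space (PX \<Otimes>\<^sub>M PV)" using X \<nu> by (simp add: space_pair_measure)
  have "sets (KZ X \<nu>) = sets PZb" by (intro sets_PiM_cong) auto
  then have ret: "(\<lambda>Z. return Nb (X, \<nu>, Z)) \<in> measurable (KZ X \<nu>) (subprob_algebra Nb)"
    using measurable_Pair2[OF return_meas Xn] by (subst measurable_cong_sets) auto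
  have "(\<integral>\<^sup>+ \<omega>. ennreal (loss (snd (snd \<omega>))) \<partial>bind (KZ X \<nu>) (\<lambda>Z. return Nb (X, \<nu>, Z)))
      = (\<integral>\<^sup>+ Z. \<integral>\<^sup>+ \<omega>. ennreal (loss (snd (snd \<omega>))) \<partial>return Nb (X, \<nu>, Z) \<partial>KZ X \<nu>)"
    by (rule nn_integral_bind[OF loss_meas ret])
  also have "\<dots> = (\<integral>\<^sup>+ Z. ennreal (loss Z) \<partial>KZ X \<nu>)"
  proof (rule nn_integral_cong)
    fix Z assume "Z \<in> space (KZ X \<nu>)"
    then have "(X, \<nu>, Z) \<in> space Nb" using X \<nu> by (simp add: space_pair_measure space_PiM)
    then show "(\<integral>\<^sup>+ \<omega>. ennreal (loss (snd (snd \<omega>))) \<partial>return Nb (X, \<nu>, Z)) = ennreal (loss Z)"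
      using nn_integral_return[OF _ loss_meas] by simp
  qed
  finally show ?thesis .
qed

lemma expected_loss:
  "(\<integral>\<^sup>+ \<omega>. ennreal (loss (snd (snd \<omega>))) \<partial>joint_law \<psi> \<alpha> \<gamma> p n k)
    \<le> ennreal (base_risk + noise_risk + 2 * corr_factor C * (real m * c0\<^sup>2 / real n))"
proof -
  let ?f = "\<lambda>\<omega>. ennreal (loss (snd (snd \<omega>)))"
  have "(\<integral>\<^sup>+ \<omega>. ?f \<omega> \<partial>joint_law \<psi> \<alpha> \<gamma> p n k) =
     (\<integral>\<^sup>+ X. \<integral>\<^sup>+ \<omega>. ?f \<omega> \<partial>bind PV (\<lambda>\<nu>. bind (KZ X \<nu>) (\<lambda>Z. return Nb (X, \<nu>, Z))) \<partial>PX)"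
    unfolding joint_law_eq by (rule nn_integral_bind[OF loss_meas V_stage_meas])
  also have "\<dots> \<le> (\<integral>\<^sup>+ X. ennreal ((base_risk + noise_risk) + 2 * corr_factor C * coef_err n X) \<partial>PX)"
  proof (rule nn_integral_mono)
    fix X assume X: "X \<in> space PX"
    have "(\<integral>\<^sup>+ \<omega>. ?f \<omega> \<partial>bind PV (\<lambda>\<nu>. bind (KZ X \<nu>) (\<lambda>Z. return Nb (X, \<nu>, Z))))
        = (\<integral>\<^sup>+ \<nu>. \<integral>\<^sup>+ \<omega>. ?f \<omega> \<partial>bind (KZ X \<nu>) (\<lambda>Z. return Nb (X, \<nu>, Z)) \<partial>PV)"
      using measurable_Pair2[OF Z_stage_meas X] by (intro nn_integral_bind[OF loss_meas]) simp
    also have "\<dots> = (\<integral>\<^sup>+ \<nu>. \<integral>\<^sup>+ Z. ennreal (loss Z) \<partial>KZ X \<nu> \<partial>PV)"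
      by (intro nn_integral_cong Z_stage_integral[OF X])
    also have "\<dots> \<le> (\<integral>\<^sup>+ \<nu>. ennreal (base_risk + 2 * corr_factor C * coef_err n X
        + 2 * corr_factor C * (\<Sum>j=1..m. (\<nu> j)\<^sup>2)) \<partial>PV)"
      by (intro nn_integral_mono risk_given_data_noise)
    also have "\<dots> = ennreal ((base_risk + noise_risk) + 2 * corr_factor C * coef_err n X)"
      by (rule risk_given_data)
    finally show "(\<integral>\<^sup>+ \<omega>. ?f \<omega> \<partial>bind PV (\<lambda>\<nu>. bind (KZ X \<nu>) (\<lambda>Z. return Nb (X, \<nu>, Z))))
        \<le> ennreal ((base_risk + noise_risk) + 2 * corr_factor C * coef_err n X)" .
  qed
  also have "\<dots> \<le> ennreal (base_risk + noise_risk + 2 * corr_factor C * (real m * c0\<^sup>2 / real n))"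
    by (rule risk_unconditional)
  finally show ?thesis .
qed

lemma risk_rate:
  "base_risk + noise_risk + 2 * corr_factor C * (real m * c0\<^sup>2 / real n)
     \<le> risk_const C \<gamma> c0 \<alpha> * real n powr (- (2 * \<gamma>) / (2 * \<gamma> + 1))"
proof -
  let ?r = "real n powr (- (2 * \<gamma>) / (2 * \<gamma> + 1))" and ?K = "corr_factor C"
  note rate = bandwidth_rates[OF gam n1]
  have K: "0 \<le> ?K" by (rule corr_factor_nonneg)
  have n0: "real n > 0" using n1 by simp
  have bias_rate: "bias m \<le> C\<^sup>2 * 4 powr \<gamma> * ?r"
  proof -
    have "bias m \<le> C\<^sup>2 * (1 / real m powr (2 * \<gamma>))" using bias_bound m1 by simp
    also have "\<dots> \<le> C\<^sup>2 * (4 powr \<gamma> * ?r)" using rate(2) by (intro mult_left_mono) auto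
    finally show ?thesis by simp
  qed
  have var_rate: "real m * c0\<^sup>2 / real k \<le> c0\<^sup>2 * ?r"
  proof -
    have "real m * c0\<^sup>2 / real k \<le> real m * c0\<^sup>2 / real n"
      using kn n0 by (intro divide_left_mono) auto
    also have "\<dots> = c0\<^sup>2 * (real m / real n)" by simp
    also have "\<dots> \<le> c0\<^sup>2 * ?r" using rate(3) by (intro mult_left_mono) auto
    finally show ?thesis .
  qed
  have noise_rate: "noise_risk \<le> 4 * ?K * c0\<^sup>2 / \<alpha>\<^sup>2 * ?r"
  proof -
    have "noise_risk = 4 * ?K * c0\<^sup>2 / \<alpha>\<^sup>2 * (real m ^ 3 / (real n)\<^sup>2)"
      unfolding noise_risk_def lap_rate_def using n0 m1 alpha c0_pos
      by (simp add: field_simps power2_eq_square power3_eq_cube)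
    also have "\<dots> \<le> 4 * ?K * c0\<^sup>2 / \<alpha>\<^sup>2 * ?r" using rate(4) K by (intro mult_left_mono) auto
    finally show ?thesis .
  qed
  have data_rate: "2 * ?K * (real m * c0\<^sup>2 / real n) \<le> 2 * ?K * c0\<^sup>2 * ?r"
    using mult_left_mono[OF rate(3), of "2 * ?K * c0\<^sup>2"] K by (simp add: mult_ac)
  have "(1 + ?K) * bias m \<le> (1 + ?K) * (C\<^sup>2 * 4 powr \<gamma> * ?r)"
    using bias_rate K by (intro mult_left_mono) auto
  then show ?thesis using var_rate noise_rate data_rate
    unfolding base_risk_def risk_const_def by (simp add: algebra_simps)
qed

lemma tail_bound:
  assumes M: "M > 0"
  defines "r \<equiv> real n powr (- (2 * \<gamma>) / (2 * \<gamma> + 1))"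
  defines "J \<equiv> joint_law \<psi> \<alpha> \<gamma> p n k"
  shows "{\<omega> \<in> space J. L2err01 p (phatZ \<psi> m k (snd (snd \<omega>))) > M * r} \<in> sets J
    \<and> measure J {\<omega> \<in> space J. L2err01 p (phatZ \<psi> m k (snd (snd \<omega>))) > M * r}
      \<le> risk_const C \<gamma> c0 \<alpha> / M"
proof -
  have r: "r > 0" unfolding r_def using n1 by simp
  have meas: "(\<lambda>\<omega>. loss (snd (snd \<omega>))) \<in> borel_measurable J"
    unfolding J_def measurable_cong_sets[OF sets_joint_law refl] loss_def
    using coef_err_meas by measurable
  have int: "(\<integral>\<^sup>+ \<omega>. ennreal (loss (snd (snd \<omega>))) \<partial>J) \<le> ennreal (risk_const C \<gamma> c0 \<alpha> * r)"
    unfolding J_def r_def using expected_loss risk_rate by (rule order_trans[OF _ ennreal_leI])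
  note markov = markov_tail[OF meas int mult_nonneg_nonneg[OF risk_const_nonneg] mult_pos_pos[OF M r]]
  have "risk_const C \<gamma> c0 \<alpha> * r / (M * r) = risk_const C \<gamma> c0 \<alpha> / M" using r by simp
  then show ?thesis
    using markov risk_const_nonneg r unfolding L2err_eq_loss by simp
qed

end

lemma onb01_bounded_onb:
  assumes onb: "onb01 \<psi>" and bdd: "bdd_above {\<bar>\<psi> j x\<bar> | j x. j \<ge> 1 \<and> x \<in> {0..1}}"
  shows "bounded_onb \<psi> (c0_of \<psi>)"
proof
  show "\<bar>\<psi> j x\<bar> \<le> c0_of \<psi>" if "j \<ge> 1" "x \<in> {0..1}" for j x
    unfolding c0_of_def by (rule cSup_upper) (use bdd that in auto)
qed (use onb[unfolded onb01_def set_integral_U01] in auto)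

lemma sobolev_P_density:
  assumes "bounded_onb \<psi> c0" and "p \<in> sobolev_P \<psi> \<gamma> C" and "\<gamma> > 0"
  obtains \<beta> where "sobolev_density \<psi> c0 p \<beta> \<gamma> C"
proof -
  from assms(2) obtain \<beta> where p: "p \<in> borel_measurable borel" "\<forall>x\<in>{0..1}. 0 \<le> p x"
      "integrable U01 (\<lambda>x. (p x)\<^sup>2)" "integral\<^sup>L U01 p = 1" "sobolev_B \<gamma> C \<beta>"
      "(\<lambda>N. integral\<^sup>L U01 (\<lambda>x. (p x - 1 - (\<Sum>j=1..N. \<beta> j * \<psi> j x))\<^sup>2)) \<longlonglongrightarrow> 0"
    unfolding sobolev_P_def set_integral_U01 set_integrable_U01 mem_Collect_eq by blast
  have "sobolev_density \<psi> c0 p \<beta> \<gamma> C"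
    using assms(1,3) p by (simp add: sobolev_density_def sobolev_density_axioms_def)
  then show thesis by (rule that)
qed

lemma bounded_in_probability:
  assumes K: "0 \<le> K"
    and tail: "\<And>n M. N \<le> n \<Longrightarrow> 0 < M \<Longrightarrow> E n M \<in> sets (P n) \<and> measure (P n) (E n M) \<le> K / M"
  shows "\<forall>\<epsilon>>0. \<exists>M>0. \<exists>N. \<forall>n\<ge>N. E n M \<in> sets (P n) \<and> measure (P n) (E n M) < \<epsilon>"
proof (intro allI impI)
  fix \<epsilon> :: real assume \<epsilon>: "\<epsilon> > 0"
  define M where "M = K / \<epsilon> + 1"
  have M: "M > 0" unfolding M_def using K \<epsilon> by (simp add: add_nonneg_pos)
  have "K < \<epsilon> * M" unfolding M_def using \<epsilon> by (simp add: algebra_simps)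
  then have KM: "K / M < \<epsilon>" using M by (simp add: divide_less_eq mult.commute)
  have "E n M \<in> sets (P n) \<and> measure (P n) (E n M) < \<epsilon>" if "N \<le> n" for n
    using tail[OF that M] KM by linarith
  then show "\<exists>M>0. \<exists>N. \<forall>n\<ge>N. E n M \<in> sets (P n) \<and> measure (P n) (E n M) < \<epsilon>"
    using M by blast
qed

theorem mainTheorem13:
  fixes \<psi> :: "nat \<Rightarrow> real \<Rightarrow> real" and p :: "real \<Rightarrow> real"
    and \<gamma> C \<alpha> :: real and k :: "nat \<Rightarrow> nat"
  assumes "onb01 \<psi>"
    and "bdd_above {\<bar>\<psi> j x\<bar> | j x. j \<ge> 1 \<and> x \<in> {0..1}}"
    and "\<gamma> > 1" and "C > 0" and "\<alpha> > 0"
    and "p \<in> sobolev_P \<psi> \<gamma> C"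
    and "\<forall>n. k n \<ge> n"
  shows "\<forall>\<epsilon>>0. \<exists>M>0. \<exists>N. \<forall>n\<ge>N.
    {\<omega> \<in> space (joint_law \<psi> \<alpha> \<gamma> p n (k n)).
       L2err01 p (phatZ \<psi> (m_of \<gamma> n) (k n) (snd (snd \<omega>))) > M * real n powr (- (2 * \<gamma>) / (2 * \<gamma> + 1))}
      \<in> sets (joint_law \<psi> \<alpha> \<gamma> p n (k n))
    \<and> measure (joint_law \<psi> \<alpha> \<gamma> p n (k n))
      {\<omega> \<in> space (joint_law \<psi> \<alpha> \<gamma> p n (k n)).
       L2err01 p (phatZ \<psi> (m_of \<gamma> n) (k n) (snd (snd \<omega>))) > M * real n powr (- (2 * \<gamma>) / (2 * \<gamma> + 1))}
      < \<epsilon>"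
proof -
  interpret bounded_onb \<psi> "c0_of \<psi>" using onb01_bounded_onb assms(1,2) .
  obtain \<beta> where "sobolev_density \<psi> (c0_of \<psi>) p \<beta> \<gamma> C"
    using sobolev_P_density[OF bounded_onb_axioms assms(6)] assms(3) by auto
  then interpret sobolev_density \<psi> "c0_of \<psi>" p \<beta> \<gamma> C .
  show ?thesis
  proof (rule bounded_in_probability[where K="risk_const C \<gamma> (c0_of \<psi>) \<alpha>" and N=1],
      goal_cases)
    case 1
    show ?case by (rule risk_const_nonneg)
  next
    case (2 n M)
    interpret synthetic_estimator \<psi> "c0_of \<psi>" p \<beta> \<gamma> C n "k n" \<alpha>
      by unfold_locales (use 2 assms(3,5,7) in auto)
    show ?case using tail_bound[OF \<open>0 < M\<close>] .
  qed
qed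

end
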